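(* Let $G$ be a group, $X=\{1,\dots,d\}$, and $\psi:G\to S_d\ltimes G^d$ a homomorphism (wreath recursion). For $n\ge0$ let $K_n$ be the set of $g\in G$ such that $g(v)=v$ and $g|_v=1$ for all $v\in X^n$. Then $K_n\supseteq K_{n-1}$. If $\bigcup_{n\ge0}K_n$ equals the kernel of the action of $G$ on $X^*$ (i.e., of the epimorphism $G\to\overline{G}$), then the natural epimorphism $\mathcal{V}_\psi\to\mathcal{V}_{\overline{G}}$ is an isomorphism.
   Context: Elements of $S_d\ltimes G^d$ are written $\sigma(g_1,\dots,g_d)$ with multiplication $\sigma(g_1,\ldots,g_d)\pi(h_1,\ldots,h_d)=\sigma\pi(g_{\pi(1)}h_1,\ldots,g_{\pi(d)}h_d)$. The homomorphism $\psi$ defines an action of $G$ on the rooted tree $X^*$ of finite words by $g(xw)=\sigma(x)g_x(w)$ where $\psi(g)=\sigma(g_1,\ldots,g_d)$, and sections $g|_v\in G$ by $g|_x=g_x$ and $g|_{xv}=(g|_x)|_v$, so that $g(vw)=g(v)g|_v(w)$. $\overline{G}$ is the quotient of $G$ by the kernel of this action (a self-similar group acting faithfully on $X^*$). A complete antichain is a finite set of words in $X^*$, none a prefix of another, such that every infinite sequence has exactly one of them as prefix. $\mathcal{V}_\psi$ is the group of equivalence classes of tables $\begin{pmatrix}v_1&\cdots&v_n\\ g_1&\cdots&g_n\\ u_1&\cdots&u_n\end{pmatrix}$ with $g_i\in G$ and $\{v_i\}$, $\{u_i\}$ complete antichains, where tables are equivalent if they become equal up to permutation of columns after iteratively replacing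 a column $(v,g,u)$ by the $d$ columns $(vi,\ g_i,\ u\sigma(i))$, $i=1,\ldots,d$, with $\psi(g)=\sigma(g_1,\ldots,g_d)$; multiplication is $(w_i,g_i,u_i)_i\cdot(v_i,h_i,w_i)_i=(v_i,g_ih_i,u_i)_i$ (after bringing tables to matching form). $\mathcal{V}_{\overline{G}}$ is defined in the same way with $\overline{G}$ (equivalently, the group of homeomorphisms $g$ of $X^\omega$ with $g(v_iw)=u_i\bar g_i(w)$), and the natural epimorphism replaces each $g_i$ by its image in $\overline{G}$. *)

theory Defs
  imports "HOL-Algebra.Group"
begin

text \<open>Alphabet X = {0..<d} (the paper's {1..d}, shifted).
A wreath recursion psi : G -> S_d semidirect G^d is given by its components:
psi(g) = sigma_g (g|_0, ..., g|_(d-1)), with sigma_g = perm g and g|_i = sec g i.\<close>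

type_synonym 'a table = "(nat list \<times> 'a \<times> nat list) set"

definition wreath_recursion ::
  "('g, 'b) monoid_scheme \<Rightarrow> nat \<Rightarrow> ('g \<Rightarrow> nat \<Rightarrow> nat) \<Rightarrow> ('g \<Rightarrow> nat \<Rightarrow> 'g) \<Rightarrow> bool" where
  "wreath_recursion G d perm sec \<longleftrightarrow>
     (\<forall>g\<in>carrier G. bij_betw (perm g) {0..<d} {0..<d}) \<and>
     (\<forall>g\<in>carrier G. \<forall>i<d. sec g i \<in> carrier G) \<and>
     (\<forall>g\<in>carrier G. \<forall>h\<in>carrier G. \<forall>i<d.
        perm (g \<otimes>\<^bsub>G\<^esub> h) i = perm g (perm h i) \<and>
        sec (g \<otimes>\<^bsub>G\<^esub> h) i = sec g (perm h i) \<otimes>\<^bsub>G\<^esub> sec h i)"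

fun act :: "('g \<Rightarrow> nat \<Rightarrow> nat) \<Rightarrow> ('g \<Rightarrow> nat \<Rightarrow> 'g) \<Rightarrow> 'g \<Rightarrow> nat list \<Rightarrow> nat list" where
  "act perm sec g [] = []"
| "act perm sec g (x # w) = perm g x # act perm sec (sec g x) w"

fun secw :: "('g \<Rightarrow> nat \<Rightarrow> 'g) \<Rightarrow> 'g \<Rightarrow> nat list \<Rightarrow> 'g" where
  "secw sec g [] = g"
| "secw sec g (x # w) = secw sec (sec g x) w"

definition Kset ::
  "('g, 'b) monoid_scheme \<Rightarrow> nat \<Rightarrow> ('g \<Rightarrow> nat \<Rightarrow> nat) \<Rightarrow> ('g \<Rightarrow> nat \<Rightarrow> 'g) \<Rightarrow> nat \<Rightarrow> 'g set" where
  "Kset G d perm sec n = {g \<in> carrier G. \<forall>v\<in>lists {0..<d}. length v = n \<longrightarrow>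
       act perm sec g v = v \<and> secw sec g v = \<one>\<^bsub>G\<^esub>}"

definition action_kernel ::
  "('g, 'b) monoid_scheme \<Rightarrow> nat \<Rightarrow> ('g \<Rightarrow> nat \<Rightarrow> nat) \<Rightarrow> ('g \<Rightarrow> nat \<Rightarrow> 'g) \<Rightarrow> 'g set" where
  "action_kernel G d perm sec = {g \<in> carrier G. \<forall>w\<in>lists {0..<d}. act perm sec g w = w}"

text \<open>The faithful quotient G-bar, realised as the group of maps of X^* induced by G
(restricted to X^*), with its induced wreath recursion.\<close>

definition actbar :: "nat \<Rightarrow> ('g \<Rightarrow> nat \<Rightarrow> nat) \<Rightarrow> ('g \<Rightarrow> nat \<Rightarrow> 'g) \<Rightarrow> 'g \<Rightarrow> nat list \<Rightarrow> nat list" where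
  "actbar d perm sec g = restrict (act perm sec g) (lists {0..<d})"

definition Gbar ::
  "('g, 'b) monoid_scheme \<Rightarrow> nat \<Rightarrow> ('g \<Rightarrow> nat \<Rightarrow> nat) \<Rightarrow> ('g \<Rightarrow> nat \<Rightarrow> 'g) \<Rightarrow> (nat list \<Rightarrow> nat list) monoid" where
  "Gbar G d perm sec = \<lparr>carrier = actbar d perm sec ` carrier G,
      monoid.mult = (\<lambda>f h. restrict (f \<circ> h) (lists {0..<d})),
      one = restrict id (lists {0..<d})\<rparr>"

definition permbar :: "(nat list \<Rightarrow> nat list) \<Rightarrow> nat \<Rightarrow> nat" where
  "permbar f i = hd (f [i])"

definition secbar :: "nat \<Rightarrow> (nat list \<Rightarrow> nat list) \<Rightarrow> nat \<Rightarrow> (nat list \<Rightarrow> nat list)" where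
  "secbar d f i = restrict (\<lambda>w. tl (f (i # w))) (lists {0..<d})"

definition complete_antichain :: "nat \<Rightarrow> nat list set \<Rightarrow> bool" where
  "complete_antichain d A \<longleftrightarrow> finite A \<and> A \<subseteq> lists {0..<d} \<and>
     (\<forall>u\<in>A. \<forall>v\<in>A. (\<exists>w. v = u @ w) \<longrightarrow> u = v) \<and>
     (\<forall>f::nat \<Rightarrow> nat. (\<forall>n. f n < d) \<longrightarrow> (\<exists>!v. v \<in> A \<and> v = map f [0..<length v]))"

text \<open>Tables: a table is the finite set of its columns (v, g, u), so that tables which
agree up to a permutation of columns are literally equal.\<close>
definition valid_table :: "('a, 'b) monoid_scheme \<Rightarrow> nat \<Rightarrow> 'a table \<Rightarrow> bool" where
  "valid_table H d T \<longleftrightarrow> finite T \<and> (\<forall>(v, g, u)\<in>T. g \<in> carrier H) \<and>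
     inj_on (\<lambda>(v, g, u). v) T \<and> inj_on (\<lambda>(v, g, u). u) T \<and>
     complete_antichain d ((\<lambda>(v, g, u). v) ` T) \<and>
     complete_antichain d ((\<lambda>(v, g, u). u) ` T)"

definition expand1 :: "nat \<Rightarrow> ('a \<Rightarrow> nat \<Rightarrow> nat) \<Rightarrow> ('a \<Rightarrow> nat \<Rightarrow> 'a) \<Rightarrow> 'a table \<Rightarrow> 'a table \<Rightarrow> bool" where
  "expand1 d perm sec T T' \<longleftrightarrow> (\<exists>v g u. (v, g, u) \<in> T \<and>
      T' = (T - {(v, g, u)}) \<union> (\<lambda>i. (v @ [i], sec g i, u @ [perm g i])) ` {0..<d})"

definition table_rel ::
  "('a, 'b) monoid_scheme \<Rightarrow> nat \<Rightarrow> ('a \<Rightarrow> nat \<Rightarrow> nat) \<Rightarrow> ('a \<Rightarrow> nat \<Rightarrow> 'a) \<Rightarrow> ('a table \<times> 'a table) set" where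
  "table_rel H d perm sec = {(T, T'). valid_table H d T \<and> valid_table H d T' \<and>
     (\<lambda>A B. valid_table H d A \<and> valid_table H d B \<and>
            (expand1 d perm sec A B \<or> expand1 d perm sec B A))\<^sup>*\<^sup>* T T'}"

definition compose_tables :: "('a, 'b) monoid_scheme \<Rightarrow> 'a table \<Rightarrow> 'a table \<Rightarrow> 'a table" where
  "compose_tables H T1 T2 = {(v, g \<otimes>\<^bsub>H\<^esub> h, u) | v g h u w. (w, g, u) \<in> T1 \<and> (v, h, w) \<in> T2}"

definition V_group ::
  "('a, 'b) monoid_scheme \<Rightarrow> nat \<Rightarrow> ('a \<Rightarrow> nat \<Rightarrow> nat) \<Rightarrow> ('a \<Rightarrow> nat \<Rightarrow> 'a) \<Rightarrow> ('a table set) monoid" where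
  "V_group H d perm sec = \<lparr>carrier = {T. valid_table H d T} // table_rel H d perm sec,
      monoid.mult = (\<lambda>A B. SOME C. \<exists>T1\<in>A. \<exists>T2\<in>B.
          (\<lambda>(v, g, u). v) ` T1 = (\<lambda>(v, g, u). u) ` T2 \<and>
          C = table_rel H d perm sec `` {compose_tables H T1 T2}),
      one = table_rel H d perm sec `` {{([], \<one>\<^bsub>H\<^esub>, [])}}\<rparr>"

definition natural_map ::
  "('g, 'b) monoid_scheme \<Rightarrow> nat \<Rightarrow> ('g \<Rightarrow> nat \<Rightarrow> nat) \<Rightarrow> ('g \<Rightarrow> nat \<Rightarrow> 'g) \<Rightarrow>
   'g table set \<Rightarrow> (nat list \<Rightarrow> nat list) table set" where
  "natural_map G d perm sec A =
     table_rel (Gbar G d perm sec) d permbar (secbar d) ``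
       {(\<lambda>(v, g, u). (v, actbar d perm sec g, u)) ` (SOME T. T \<in> A)}"

end

(*
  A table is determined, up to equivalence, by its expansions: the columns
  (v w, g|_w, u g(w)) of all tables obtained from it by repeated expansion. Two valid
  tables are equivalent exactly when their expansions agree on all columns whose top word
  is long enough, because both can be expanded to the same level of the tree. Since the
  natural map commutes with taking expansions, it is a well-defined surjective
  homomorphism. For injectivity, suppose the images of two tables are equivalent and
  expand both tables to a deep level; then corresponding entries g and g' have the same
  image in G-bar, so g'^-1 g lies in the kernel of the action and hence in some K_n.
  Thus g and g' have equal sections at all words of length at least n, and the
  expansions of the two tables eventually agree.
*)

theory Submission
  imports Defs "HOL-Library.Sublist"
begin

lemma length_act [simp]: "length (act p s g w) = length w"
  by (induction w arbitrary: g) auto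

lemma act_append: "act p s g (v @ w) = act p s g v @ act p s (secw s g v) w"
  by (induction v arbitrary: g) auto

lemma secw_append: "secw s g (v @ w) = secw s (secw s g v) w"
  by (induction v arbitrary: g) auto

locale wreath_recursion_magma =
  fixes H :: "('a, 'b) monoid_scheme" (structure) and d :: nat
    and p :: "'a \<Rightarrow> nat \<Rightarrow> nat" and s :: "'a \<Rightarrow> nat \<Rightarrow> 'a"
  assumes perm_bij: "g \<in> carrier H \<Longrightarrow> bij_betw (p g) {0..<d} {0..<d}"
    and sec_closed: "g \<in> carrier H \<Longrightarrow> i < d \<Longrightarrow> s g i \<in> carrier H"
    and mult_closed: "g \<in> carrier H \<Longrightarrow> h \<in> carrier H \<Longrightarrow> g \<otimes> h \<in> carrier H"
    and perm_mult: "g \<in> carrier H \<Longrightarrow> h \<in> carrier H \<Longrightarrow> i < d \<Longrightarrow> p (g \<otimes> h) i = p g (p h i)"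
    and sec_mult: "g \<in> carrier H \<Longrightarrow> h \<in> carrier H \<Longrightarrow> i < d \<Longrightarrow>
      s (g \<otimes> h) i = s g (p h i) \<otimes> s h i"
begin

lemma perm_less: "g \<in> carrier H \<Longrightarrow> i < d \<Longrightarrow> p g i < d"
  using bij_betw_apply[OF perm_bij] by simp

lemma act_lists: "g \<in> carrier H \<Longrightarrow> w \<in> lists {0..<d} \<Longrightarrow> act p s g w \<in> lists {0..<d}"
  by (induction w arbitrary: g) (auto simp: perm_less sec_closed)

lemma secw_closed: "g \<in> carrier H \<Longrightarrow> w \<in> lists {0..<d} \<Longrightarrow> secw s g w \<in> carrier H"
  by (induction w arbitrary: g) (auto simp: sec_closed)

lemma act_mult:
  "g \<in> carrier H \<Longrightarrow> h \<in> carrier H \<Longrightarrow> w \<in> lists {0..<d} \<Longrightarrow>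
    act p s (g \<otimes> h) w = act p s g (act p s h w)"
  by (induction w arbitrary: g h) (auto simp: perm_mult sec_mult perm_less sec_closed)

lemma secw_mult:
  "g \<in> carrier H \<Longrightarrow> h \<in> carrier H \<Longrightarrow> w \<in> lists {0..<d} \<Longrightarrow>
    secw s (g \<otimes> h) w = secw s g (act p s h w) \<otimes> secw s h w"
  by (induction w arbitrary: g h) (auto simp: perm_mult sec_mult perm_less sec_closed)

end

section \<open>Complete antichains\<close>

lemma complete_antichain_finite: "complete_antichain d A \<Longrightarrow> finite A"
  unfolding complete_antichain_def by blast

lemma complete_antichain_lists: "complete_antichain d A \<Longrightarrow> a \<in> A \<Longrightarrow> a \<in> lists {0..<d}"
  unfolding complete_antichain_def by blast

lemma complete_antichain_antichain:
  "complete_antichain d A \<Longrightarrow> \<forall>u\<in>A. \<forall>v\<in>A. (\<exists>w. v = u @ w) \<longrightarrow> u = v"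
  unfolding complete_antichain_def by blast

lemma complete_antichain_initial_segment:
  "complete_antichain d A \<Longrightarrow> \<forall>n. f n < d \<Longrightarrow> \<exists>a\<in>A. a = map f [0..<length a]"
  unfolding complete_antichain_def by (metis (mono_tags, lifting))

lemma complete_antichain_prefix_eq:
  "complete_antichain d A \<Longrightarrow> a \<in> A \<Longrightarrow> b \<in> A \<Longrightarrow> prefix a b \<Longrightarrow> a = b"
  unfolding complete_antichain_def prefix_def by blast

lemma complete_antichain_common_prefix_eq:
  "complete_antichain d A \<Longrightarrow> a \<in> A \<Longrightarrow> b \<in> A \<Longrightarrow> prefix a x \<Longrightarrow> prefix b x \<Longrightarrow> a = b"
  by (metis complete_antichain_prefix_eq prefix_same_cases)

lemma prefix_of_initial_segments:
  "length a \<le> length b \<Longrightarrow> a = map f [0..<length a] \<Longrightarrow> b = map f [0..<length b] \<Longrightarrow> prefix a b"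
  by (metis map_append le_add_diff_inverse prefixI upt_add_eq_append zero_le)

lemma antichain_initial_segment_unique:
  assumes "\<forall>u\<in>A. \<forall>v\<in>A. (\<exists>w. v = u @ w) \<longrightarrow> u = v"
    and "a \<in> A" "a = map f [0..<length a]" "b \<in> A" "b = map f [0..<length b]"
  shows "a = b"
  using assms prefix_of_initial_segments[of a b f] prefix_of_initial_segments[of b a f]
  unfolding prefix_def by (metis nat_le_linear)

lemma extend_to_sequence:
  assumes "0 < d" "x \<in> lists {0..<d}"
  obtains f where "\<forall>n. f n < d" "x = map f [0..<length x]"
proof
  let ?f = "\<lambda>n. if n < length x then x ! n else 0"
  show "\<forall>n. ?f n < d" using assms by (auto simp: in_lists_conv_set)
  show "x = map ?f [0..<length x]" by (rule nth_equalityI) simp_all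
qed

lemma complete_antichain_has_prefix:
  assumes A: "complete_antichain d A" and "0 < d" "x \<in> lists {0..<d}"
    and long: "\<forall>a\<in>A. length a \<le> length x"
  shows "\<exists>a\<in>A. prefix a x"
proof -
  obtain f where f: "\<forall>n. f n < d" "x = map f [0..<length x]"
    using extend_to_sequence assms(2,3) by blast
  then obtain a where a: "a \<in> A" "a = map f [0..<length a]"
    using complete_antichain_initial_segment[OF A] by blast
  have "prefix a x"
    using prefix_of_initial_segments[OF long[rule_format, OF a(1)] a(2) f(2)] .
  with a(1) show ?thesis ..
qed

lemma complete_antichain_subset_eq:
  assumes "0 < d" "complete_antichain d A" "complete_antichain d B" "A \<subseteq> B"
  shows "A = B"
proof (intro equalityI subsetI assms(4)[THEN subsetD])
  fix b assume b: "b \<in> B"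
  obtain f where f: "\<forall>n. f n < d" "b = map f [0..<length b]"
    using extend_to_sequence assms(1) complete_antichain_lists[OF assms(3) b] by blast
  then obtain a where a: "a \<in> A" "a = map f [0..<length a]"
    using complete_antichain_initial_segment[OF assms(2)] by blast
  from antichain_initial_segment_unique[OF complete_antichain_antichain[OF assms(3)] _ a(2) b f(2)]
    a(1) assms(4)
  show "b \<in> A" by blast
qed

lemma complete_antichain_expand_prefix_eq:
  assumes A: "complete_antichain d A" and v: "v \<in> A"
    and a: "a \<in> (A - {v}) \<union> (\<lambda>i. v @ [i]) ` {0..<d}" and b: "b \<in> (A - {v}) \<union> (\<lambda>i. v @ [i]) ` {0..<d}"
    and ab: "prefix a b"
  shows "a = b"
proof -
  have above_v: "x = v" if "x \<in> A" "prefix v x" for x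
    using complete_antichain_prefix_eq[OF A v that] by simp
  show "a = b"
  proof (cases "a \<in> A - {v}")
    case True
    then show ?thesis
      using b ab complete_antichain_prefix_eq[OF A] complete_antichain_common_prefix_eq[OF A _ v]
      by (auto intro: prefixI)
  next
    case False
    then obtain i where "a = v @ [i]" using a by blast
    then show ?thesis using b ab above_v prefix_order.trans[of v a b]
      by (auto simp: prefix_def)
  qed
qed

lemma complete_antichain_expand:
  assumes A: "complete_antichain d A" and v: "v \<in> A"
  shows "complete_antichain d ((A - {v}) \<union> (\<lambda>i. v @ [i]) ` {0..<d})"
proof -
  let ?A = "(A - {v}) \<union> (\<lambda>i. v @ [i]) ` {0..<d}"
  have anti: "\<forall>a\<in>?A. \<forall>b\<in>?A. (\<exists>w. b = a @ w) \<longrightarrow> a = b"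
    using complete_antichain_expand_prefix_eq[OF A v] by (blast intro: prefixI)
  have segment: "\<exists>a\<in>?A. a = map f [0..<length a]" if f: "\<forall>n. f n < d" for f
  proof -
    obtain a where a: "a \<in> A" "a = map f [0..<length a]"
      using complete_antichain_initial_segment[OF A f] by blast
    show ?thesis
    proof (cases "a = v")
      case True
      have "map f [0..<length (v @ [f (length v)])] = map f [0..<length v] @ [f (length v)]"
        by simp
      also have "map f [0..<length v] = v" using a(2)[symmetric] True by simp
      finally have "v @ [f (length v)] = map f [0..<length (v @ [f (length v)])]" by (rule sym)
      moreover have "v @ [f (length v)] \<in> ?A" using f by simp
      ultimately show ?thesis by blast
    qed (use a in blast)
  qed
  show ?thesis
    unfolding complete_antichain_def
  proof (intro conjI allI impI anti)
    show "finite ?A" using complete_antichain_finite[OF A] by blast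
    show "?A \<subseteq> lists {0..<d}" using complete_antichain_lists[OF A v] complete_antichain_lists[OF A] by auto
    show "\<exists>!a. a \<in> ?A \<and> a = map f [0..<length a]" if "\<forall>n. f n < d" for f
      using segment[OF that] antichain_initial_segment_unique[OF anti] by blast
  qed
qed

definition level :: "nat \<Rightarrow> nat \<Rightarrow> nat list set" where
  "level d n = {x \<in> lists {0..<d}. length x = n}"

lemma complete_antichain_level: "complete_antichain d (level d n)"
  unfolding complete_antichain_def
proof (intro conjI allI impI)
  have "level d n = {xs. set xs \<subseteq> {0..<d} \<and> length xs = n}"
    unfolding level_def by (auto simp: in_lists_conv_set)
  then show "finite (level d n)"
    using finite_lists_length_eq[of "{0..<d}" n] by simp
  show "level d n \<subseteq> lists {0..<d}" unfolding level_def by blast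
  show "\<forall>u\<in>level d n. \<forall>v\<in>level d n. (\<exists>w. v = u @ w) \<longrightarrow> u = v"
    unfolding level_def by auto
  fix f :: "nat \<Rightarrow> nat" assume f: "\<forall>k. f k < d"
  show "\<exists>!a. a \<in> level d n \<and> a = map f [0..<length a]"
  proof (rule ex1I)
    show "map f [0..<n] \<in> level d n \<and> map f [0..<n] = map f [0..<length (map f [0..<n])]"
      using f unfolding level_def by (auto simp: in_lists_conv_set)
  next
    fix a assume "a \<in> level d n \<and> a = map f [0..<length a]"
    then show "a = map f [0..<n]" unfolding level_def by (metis (mono_tags) mem_Collect_eq)
  qed
qed

section \<open>Tables and their expansions\<close>

abbreviation top_row :: "('x \<times> 'y \<times> 'z) set \<Rightarrow> 'x set" where
  "top_row T \<equiv> (\<lambda>(v, g, u). v) ` T"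

abbreviation bottom_row :: "('x \<times> 'y \<times> 'z) set \<Rightarrow> 'z set" where
  "bottom_row T \<equiv> (\<lambda>(v, g, u). u) ` T"

lemma top_rowI: "(v, g, u) \<in> T \<Longrightarrow> v \<in> top_row T"
  by force

lemma bottom_rowI: "(v, g, u) \<in> T \<Longrightarrow> u \<in> bottom_row T"
  by force

lemma top_rowE: assumes "v \<in> top_row T" obtains g u where "(v, g, u) \<in> T"
  using assms by force

lemma bottom_rowE: assumes "u \<in> bottom_row T" obtains v g where "(v, g, u) \<in> T"
  using assms by force

lemma valid_table_finite: "valid_table H d T \<Longrightarrow> finite T"
  unfolding valid_table_def by blast

lemma valid_table_carrier: "valid_table H d T \<Longrightarrow> (v, g, u) \<in> T \<Longrightarrow> g \<in> carrier H"
  unfolding valid_table_def by blast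

lemma valid_table_top_row: "valid_table H d T \<Longrightarrow> complete_antichain d (top_row T)"
  unfolding valid_table_def by blast

lemma valid_table_bottom_row: "valid_table H d T \<Longrightarrow> complete_antichain d (bottom_row T)"
  unfolding valid_table_def by blast

lemma valid_table_top_unique:
  "valid_table H d T \<Longrightarrow> (v, g, u) \<in> T \<Longrightarrow> (v, g', u') \<in> T \<Longrightarrow> g' = g \<and> u' = u"
  unfolding valid_table_def inj_on_def by fastforce

lemma valid_table_bottom_unique:
  "valid_table H d T \<Longrightarrow> (v, g, u) \<in> T \<Longrightarrow> (v', g', u) \<in> T \<Longrightarrow> v' = v \<and> g' = g"
  unfolding valid_table_def inj_on_def by fastforce

lemma valid_table_top_prefix:
  assumes T: "valid_table H d T" and "(v, g, u) \<in> T" "(v', g', u') \<in> T" "prefix v v'"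
  shows "(v', g', u') = (v, g, u)"
proof -
  have "v = v'"
    using complete_antichain_prefix_eq[OF valid_table_top_row[OF T]] top_rowI assms(2-4) by metis
  then show ?thesis using valid_table_top_unique[OF T assms(2)] assms(3) by simp
qed

lemma valid_table_bottom_prefix:
  assumes T: "valid_table H d T" and "(v, g, u) \<in> T" "(v', g', u') \<in> T" "prefix u u'"
  shows "(v', g', u') = (v, g, u)"
proof -
  have "u = u'"
    using complete_antichain_prefix_eq[OF valid_table_bottom_row[OF T]] bottom_rowI assms(2-4) by metis
  then show ?thesis using valid_table_bottom_unique[OF T assms(2)] assms(3) by simp
qed

lemma valid_table_top_lists: "valid_table H d T \<Longrightarrow> (v, g, u) \<in> T \<Longrightarrow> v \<in> lists {0..<d}"
  by (meson complete_antichain_lists top_rowI valid_table_top_row)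

lemma valid_table_top_length_bound:
  assumes "valid_table H d T" obtains N where "\<forall>v\<in>top_row T. length v \<le> N"
proof -
  have "finite (length ` top_row T)" using valid_table_finite[OF assms] by blast
  then show ?thesis using that finite_nat_set_iff_bounded_le by (metis imageI)
qed

definition expansions :: "nat \<Rightarrow> ('a \<Rightarrow> nat \<Rightarrow> nat) \<Rightarrow> ('a \<Rightarrow> nat \<Rightarrow> 'a) \<Rightarrow> 'a table \<Rightarrow> 'a table" where
  "expansions d p s T =
     {(v @ w, secw s g w, u @ act p s g w) | v g u w. (v, g, u) \<in> T \<and> w \<in> lists {0..<d}}"

lemma expansionsI:
  "(v, g, u) \<in> T \<Longrightarrow> w \<in> lists {0..<d} \<Longrightarrow>
    (v @ w, secw s g w, u @ act p s g w) \<in> expansions d p s T"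
  unfolding expansions_def by blast

lemma expansionsE:
  assumes "(x, a, y) \<in> expansions d p s T"
  obtains v g u w where "(v, g, u) \<in> T" "w \<in> lists {0..<d}"
    "x = v @ w" "a = secw s g w" "y = u @ act p s g w"
  using assms unfolding expansions_def by blast

lemma subset_expansions: "T \<subseteq> expansions d p s T"
  using expansionsI[where w = "[]"] by fastforce

lemma expansions_unique:
  assumes T: "valid_table H d T"
    and "(x, a, y) \<in> expansions d p s T" "(x, a', y') \<in> expansions d p s T"
  shows "a' = a \<and> y' = y"
proof -
  obtain v g u w where c: "(v, g, u) \<in> T" "x = v @ w" "a = secw s g w" "y = u @ act p s g w"
    using assms(2) by (rule expansionsE)
  obtain v' g' u' w' where c': "(v', g', u') \<in> T" "x = v' @ w'" "a' = secw s g' w'" "y' = u' @ act p s g' w'"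
    using assms(3) by (rule expansionsE)
  have "prefix v' x" using c'(2) by (rule prefixI)
  moreover have "prefix v x" using c(2) by (rule prefixI)
  ultimately have "v' = v"
    using complete_antichain_common_prefix_eq[OF valid_table_top_row[OF T] top_rowI[OF c'(1)] top_rowI[OF c(1)]]
    by blast
  then have "g' = g \<and> u' = u" using valid_table_top_unique[OF T c(1)] c'(1) by simp
  moreover have "w' = w" using c(2) c'(2) \<open>v' = v\<close> by simp
  ultimately show ?thesis using c(3,4) c'(3,4) by simp
qed

lemma expansions_length_le:
  "(x, a, y) \<in> expansions d p s T \<Longrightarrow> \<forall>v\<in>top_row T. length v \<le> N \<Longrightarrow> length x \<le> length y + N"
  by (erule expansionsE) (force dest: top_rowI)

definition expand_column ::
  "nat \<Rightarrow> ('a \<Rightarrow> nat \<Rightarrow> nat) \<Rightarrow> ('a \<Rightarrow> nat \<Rightarrow> 'a) \<Rightarrow> nat list \<Rightarrow> 'a \<Rightarrow> nat list \<Rightarrow> 'a table \<Rightarrow> 'a table" where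
  "expand_column d p s v g u T = (T - {(v, g, u)}) \<union> (\<lambda>i. (v @ [i], s g i, u @ [p g i])) ` {0..<d}"

lemma expand1_iff: "expand1 d p s T T' \<longleftrightarrow> (\<exists>v g u. (v, g, u) \<in> T \<and> T' = expand_column d p s v g u T)"
  unfolding expand1_def expand_column_def by blast

lemma expansions_expand_column_subset:
  assumes "(v, g, u) \<in> T"
  shows "expansions d p s (expand_column d p s v g u T) \<subseteq> expansions d p s T"
proof
  fix t assume "t \<in> expansions d p s (expand_column d p s v g u T)"
  then obtain v' g' u' w where c: "(v', g', u') \<in> expand_column d p s v g u T" "w \<in> lists {0..<d}"
    and t: "t = (v' @ w, secw s g' w, u' @ act p s g' w)"
    unfolding expansions_def by blast
  show "t \<in> expansions d p s T"
  proof (cases "(v', g', u') \<in> T")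
    case False
    then have "(v', g', u') \<in> (\<lambda>i. (v @ [i], s g i, u @ [p g i])) ` {0..<d}"
      using c(1) unfolding expand_column_def by blast
    then obtain i where i: "i < d" "v' = v @ [i]" "g' = s g i" "u' = u @ [p g i]" by auto
    have "i # w \<in> lists {0..<d}" using i(1) c(2) by simp
    from expansionsI[OF assms this] show ?thesis unfolding t i by simp
  next
    case True
    show ?thesis unfolding t by (rule expansionsI[OF True c(2)])
  qed
qed

lemma expansions_subset_expand_column:
  assumes "(v, g, u) \<in> T"
  shows "expansions d p s T \<subseteq> insert (v, g, u) (expansions d p s (expand_column d p s v g u T))"
proof
  fix t assume "t \<in> expansions d p s T"
  then obtain v' g' u' w where c: "(v', g', u') \<in> T" "w \<in> lists {0..<d}"
    and t: "t = (v' @ w, secw s g' w, u' @ act p s g' w)"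
    unfolding expansions_def by blast
  show "t \<in> insert (v, g, u) (expansions d p s (expand_column d p s v g u T))"
  proof (cases "(v', g', u') = (v, g, u)")
    case True
    show ?thesis
    proof (cases w)
      case (Cons i w')
      then have "(v @ [i], s g i, u @ [p g i]) \<in> expand_column d p s v g u T"
        using c(2) unfolding expand_column_def Cons by auto
      from expansionsI[OF this, of w'] show ?thesis using c(2) t True Cons by simp
    qed (use t True in simp)
  next
    case False
    then have "(v', g', u') \<in> expand_column d p s v g u T"
      using c(1) unfolding expand_column_def by blast
    from expansionsI[OF this c(2)] show ?thesis unfolding t by blast
  qed
qed

definition agree_beyond :: "nat \<Rightarrow> 'a table \<Rightarrow> 'a table \<Rightarrow> bool" where
  "agree_beyond M X Y \<longleftrightarrow> (\<forall>x g y. M \<le> length x \<longrightarrow> ((x, g, y) \<in> X \<longleftrightarrow> (x, g, y) \<in> Y))"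

definition eventually_equiv ::
  "nat \<Rightarrow> ('a \<Rightarrow> nat \<Rightarrow> nat) \<Rightarrow> ('a \<Rightarrow> nat \<Rightarrow> 'a) \<Rightarrow> 'a table \<Rightarrow> 'a table \<Rightarrow> bool" where
  "eventually_equiv d p s T T' \<longleftrightarrow> (\<exists>M. agree_beyond M (expansions d p s T) (expansions d p s T'))"

lemma eventually_equiv_refl: "eventually_equiv d p s T T"
  unfolding eventually_equiv_def agree_beyond_def by blast

lemma eventually_equiv_sym: "eventually_equiv d p s T T' \<Longrightarrow> eventually_equiv d p s T' T"
  unfolding eventually_equiv_def agree_beyond_def by blast

lemma eventually_equiv_trans:
  assumes "eventually_equiv d p s T T'" "eventually_equiv d p s T' T''"
  shows "eventually_equiv d p s T T''"
proof -
  obtain M M' where "agree_beyond M (expansions d p s T) (expansions d p s T')"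
    "agree_beyond M' (expansions d p s T') (expansions d p s T'')"
    using assms unfolding eventually_equiv_def by blast
  then have "agree_beyond (max M M') (expansions d p s T) (expansions d p s T'')"
    unfolding agree_beyond_def by auto
  then show ?thesis unfolding eventually_equiv_def by blast
qed

lemma eventually_equiv_expand1:
  assumes "expand1 d p s T T'"
  shows "eventually_equiv d p s T T'"
proof -
  obtain v g u where c: "(v, g, u) \<in> T" and T': "T' = expand_column d p s v g u T"
    using assms unfolding expand1_iff by blast
  have "agree_beyond (Suc (length v)) (expansions d p s T) (expansions d p s T')"
    unfolding agree_beyond_def
  proof (intro allI impI)
    fix x :: "nat list" and a y assume "Suc (length v) \<le> length x"
    then have "(x, a, y) \<noteq> (v, g, u)" by auto
    then show "(x, a, y) \<in> expansions d p s T \<longleftrightarrow> (x, a, y) \<in> expansions d p s T'"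
      using expansions_expand_column_subset[OF c] expansions_subset_expand_column[OF c]
      unfolding T' by blast
  qed
  then show ?thesis unfolding eventually_equiv_def by blast
qed

lemma table_rel_valid: "(T, T') \<in> table_rel H d p s \<Longrightarrow> valid_table H d T \<and> valid_table H d T'"
  unfolding table_rel_def by blast

lemma equiv_table_rel: "equiv {T. valid_table H d T} (table_rel H d p s)"
proof (rule equivI)
  let ?step = "\<lambda>A B. valid_table H d A \<and> valid_table H d B \<and>
    (expand1 d p s A B \<or> expand1 d p s B A)"
  show "table_rel H d p s \<subseteq> {T. valid_table H d T} \<times> {T. valid_table H d T}"
    by (auto dest: table_rel_valid)
  show "refl_on {T. valid_table H d T} (table_rel H d p s)"
    by (rule refl_onI) (simp add: table_rel_def)
  have step_sym: "symp ?step\<^sup>*\<^sup>*" by (rule symp_rtranclp) (auto intro: sympI)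
  show "sym (table_rel H d p s)"
  proof (rule symI)
    fix T T' assume "(T, T') \<in> table_rel H d p s"
    then have "valid_table H d T" "valid_table H d T'" "?step\<^sup>*\<^sup>* T T'"
      by (simp_all add: table_rel_def)
    then show "(T', T) \<in> table_rel H d p s"
      using sympD[OF step_sym] by (simp add: table_rel_def)
  qed
  show "trans (table_rel H d p s)"
  proof (rule transI)
    fix T T' T'' assume "(T, T') \<in> table_rel H d p s" "(T', T'') \<in> table_rel H d p s"
    then show "(T, T'') \<in> table_rel H d p s"
      unfolding table_rel_def using rtranclp_trans[of ?step T T' T''] by simp
  qed
qed

lemma table_rel_refl: "valid_table H d T \<Longrightarrow> (T, T) \<in> table_rel H d p s"
  using equiv_table_rel unfolding equiv_def refl_on_def by blast

lemma table_rel_sym: "(T, T') \<in> table_rel H d p s \<Longrightarrow> (T', T) \<in> table_rel H d p s"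
  using equiv_table_rel unfolding equiv_def sym_def by blast

lemma table_rel_trans:
  "(T, T') \<in> table_rel H d p s \<Longrightarrow> (T', T'') \<in> table_rel H d p s \<Longrightarrow> (T, T'') \<in> table_rel H d p s"
  using equiv_table_rel unfolding equiv_def trans_def by blast

lemma eventually_equiv_if_table_rel:
  assumes "(T, T') \<in> table_rel H d p s"
  shows "eventually_equiv d p s T T'"
proof -
  have "(\<lambda>A B. valid_table H d A \<and> valid_table H d B \<and>
    (expand1 d p s A B \<or> expand1 d p s B A))\<^sup>*\<^sup>* T T'"
    using assms by (simp add: table_rel_def)
  then show ?thesis
  proof (induction rule: rtranclp_induct)
    case base
    show ?case by (rule eventually_equiv_refl)
  next
    case (step T' T'')
    from step(2) consider "expand1 d p s T' T''" | "expand1 d p s T'' T'" by blast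
    then have "eventually_equiv d p s T' T''"
      by cases (auto intro: eventually_equiv_expand1 eventually_equiv_sym[OF eventually_equiv_expand1])
    with step.IH show ?case by (rule eventually_equiv_trans)
  qed
qed

lemma uniform_section_index:
  assumes T: "valid_table H d T" and T': "valid_table H d T'" and same_top: "top_row T = top_row T'"
    and eventually: "\<And>v g u g' u'. (v, g, u) \<in> T \<Longrightarrow> (v, g', u') \<in> T' \<Longrightarrow>
      \<exists>n. \<forall>w\<in>lists {0..<d}. n \<le> length w \<longrightarrow> secw s g w = secw s g' w"
  obtains n where "\<And>v g u g' u' w. (v, g, u) \<in> T \<Longrightarrow> (v, g', u') \<in> T' \<Longrightarrow>
    w \<in> lists {0..<d} \<Longrightarrow> n \<le> length w \<Longrightarrow> secw s g w = secw s g' w"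
proof -
  let ?Q = "\<lambda>m v. \<forall>g u g' u'. (v, g, u) \<in> T \<longrightarrow> (v, g', u') \<in> T' \<longrightarrow>
    (\<forall>w\<in>lists {0..<d}. m \<le> length w \<longrightarrow> secw s g w = secw s g' w)"
  have "\<forall>v\<in>top_row T. eventually (\<lambda>m. ?Q m v) sequentially"
  proof
    fix v assume v: "v \<in> top_row T"
    obtain g u where c: "(v, g, u) \<in> T" using v by (rule top_rowE)
    have "v \<in> top_row T'" using v same_top by simp
    then obtain g' u' where c': "(v, g', u') \<in> T'" by (rule top_rowE)
    obtain n where n: "\<forall>w\<in>lists {0..<d}. n \<le> length w \<longrightarrow> secw s g w = secw s g' w"
      using eventually[OF c c'] by blast
    show "eventually (\<lambda>m. ?Q m v) sequentially"
    proof (rule eventually_sequentiallyI, intro allI impI ballI)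
      fix m g0 u0 g0' u0' w
      assume "n \<le> m" "(v, g0, u0) \<in> T" "(v, g0', u0') \<in> T'" "w \<in> lists {0..<d}" "m \<le> length w"
      moreover from this have "g0 = g" "g0' = g'"
        using valid_table_top_unique[OF T c] valid_table_top_unique[OF T' c'] by blast+
      ultimately show "secw s g0 w = secw s g0' w" using n by simp
    qed
  qed
  with finite_imageI[OF valid_table_finite[OF T]]
  have "eventually (\<lambda>m. \<forall>v\<in>top_row T. ?Q m v) sequentially"
    by (rule eventually_ball_finite)
  then obtain n where "\<forall>m\<ge>n. \<forall>v\<in>top_row T. ?Q m v"
    unfolding eventually_sequentially by blast
  then have n: "\<forall>v\<in>top_row T. ?Q n v" by blast
  show ?thesis
  proof (rule that)
    fix v g u g' u' w
    assume c: "(v, g, u) \<in> T" and c': "(v, g', u') \<in> T'" and w: "w \<in> lists {0..<d}"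
      and long: "n \<le> length w"
    show "secw s g w = secw s g' w" using n[rule_format, OF top_rowI[OF c] c c' w long] .
  qed
qed

lemma expansions_transfer_beyond:
  assumes top: "top_row T \<subseteq> top_row T'"
    and agree: "\<And>v g u g' u' w. (v, g, u) \<in> T \<Longrightarrow> (v, g', u') \<in> T' \<Longrightarrow>
      w \<in> lists {0..<d} \<Longrightarrow> n \<le> length w \<Longrightarrow>
      u' = u \<and> act p s g' w = act p s g w \<and> secw s g' w = secw s g w"
    and N: "\<forall>v\<in>top_row T. length v \<le> N"
    and xay: "(x, a, y) \<in> expansions d p s T" and long: "N + n \<le> length x"
  shows "(x, a, y) \<in> expansions d p s T'"
proof -
  obtain v g u w where c: "(v, g, u) \<in> T" and w: "w \<in> lists {0..<d}"
    and xay': "x = v @ w" "a = secw s g w" "y = u @ act p s g w"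
    using xay by (rule expansionsE)
  have "v \<in> top_row T'" using top top_rowI[OF c] by blast
  then obtain g' u' where c': "(v, g', u') \<in> T'" by (rule top_rowE)
  have "length v \<le> N" using N top_rowI[OF c] by blast
  then have "n \<le> length w" using long xay'(1) by simp
  then show ?thesis using agree[OF c c' w] expansionsI[OF c' w, where s = s and p = p] xay' by simp
qed

lemma eventually_equiv_if_sections_eventually_agree:
  assumes T: "valid_table H d T" and T': "valid_table H d T'"
    and same_top: "top_row T = top_row T'"
    and agree: "\<And>v g u g' u'. (v, g, u) \<in> T \<Longrightarrow> (v, g', u') \<in> T' \<Longrightarrow>
      u = u' \<and> (\<forall>w\<in>lists {0..<d}. act p s g w = act p s g' w) \<and>
      (\<exists>n. \<forall>w\<in>lists {0..<d}. n \<le> length w \<longrightarrow> secw s g w = secw s g' w)"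
  shows "eventually_equiv d p s T T'"
proof -
  have "\<exists>n. \<forall>w\<in>lists {0..<d}. n \<le> length w \<longrightarrow> secw s g w = secw s g' w"
    if "(v, g, u) \<in> T" "(v, g', u') \<in> T'" for v g u g' u'
    using agree[OF that] by blast
  then obtain n where n: "\<And>v g u g' u' w. (v, g, u) \<in> T \<Longrightarrow> (v, g', u') \<in> T' \<Longrightarrow>
    w \<in> lists {0..<d} \<Longrightarrow> n \<le> length w \<Longrightarrow> secw s g w = secw s g' w"
    using uniform_section_index[OF T T' same_top] by blast
  have fwd: "u' = u \<and> act p s g' w = act p s g w \<and> secw s g' w = secw s g w"
    if "(v, g, u) \<in> T" "(v, g', u') \<in> T'" "w \<in> lists {0..<d}" "n \<le> length w" for v g u g' u' w
    using agree[OF that(1,2)] n[OF that] that(3) by auto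
  have bwd: "u' = u \<and> act p s g' w = act p s g w \<and> secw s g' w = secw s g w"
    if "(v, g, u) \<in> T'" "(v, g', u') \<in> T" "w \<in> lists {0..<d}" "n \<le> length w" for v g u g' u' w
    using fwd[OF that(2,1,3,4)] by simp
  obtain N where N: "\<forall>v\<in>top_row T. length v \<le> N" using valid_table_top_length_bound[OF T] .
  then have N': "\<forall>v\<in>top_row T'. length v \<le> N" using same_top by simp
  have "agree_beyond (N + n) (expansions d p s T) (expansions d p s T')"
    unfolding agree_beyond_def
  proof (intro allI impI iffI)
    fix x :: "nat list" and a y assume long: "N + n \<le> length x"
    show "(x, a, y) \<in> expansions d p s T'" if "(x, a, y) \<in> expansions d p s T"
      using expansions_transfer_beyond[OF equalityD1[OF same_top] fwd N that long] .
    show "(x, a, y) \<in> expansions d p s T" if "(x, a, y) \<in> expansions d p s T'"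
      using expansions_transfer_beyond[OF equalityD2[OF same_top] bwd N' that long] .
  qed
  then show ?thesis unfolding eventually_equiv_def by blast
qed

lemma inj_on_replace_by_children:
  assumes inj: "inj_on f T" and c: "c \<in> T" and k: "inj_on k I"
    and above: "\<And>t. t \<in> T \<Longrightarrow> prefix (f c) (f t) \<Longrightarrow> t = c"
    and new: "\<And>i. i \<in> I \<Longrightarrow> f (new i) = f c @ [k i]"
  shows "inj_on f ((T - {c}) \<union> new ` I)"
proof -
  have "inj_on f (new ` I)"
  proof (rule inj_onI)
    fix x y assume "x \<in> new ` I" "y \<in> new ` I" "f x = f y"
    then obtain i j where "i \<in> I" "j \<in> I" "x = new i" "y = new j" "k i = k j"
      using new by auto
    moreover from this have "i = j" using inj_onD[OF k] by blast
    ultimately show "x = y" by simp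
  qed
  moreover have "f ` (T - {c}) \<inter> f ` (new ` I) = {}"
  proof (rule ccontr)
    assume "f ` (T - {c}) \<inter> f ` (new ` I) \<noteq> {}"
    then obtain t i where "t \<in> T" "t \<noteq> c" "i \<in> I" "f t = f c @ [k i]"
      using new by force
    then show False using above[of t] by (simp add: prefixI)
  qed
  ultimately show ?thesis
    using inj_on_diff[OF inj] unfolding inj_on_Un by blast
qed

lemma image_replace_by_children:
  assumes "inj_on f T" "c \<in> T"
  shows "f ` ((T - {c}) \<union> new ` I) = (f ` T - {f c}) \<union> f ` new ` I"
  using inj_on_image_set_diff[OF assms(1), of T "{c}"] assms(2) by (simp add: image_Un)

context wreath_recursion_magma
begin

lemma expansions_carrier:
  assumes T: "valid_table H d T" and "(x, a, y) \<in> expansions d p s T"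
  shows "a \<in> carrier H"
proof -
  obtain v g u w where "(v, g, u) \<in> T" "w \<in> lists {0..<d}" "a = secw s g w"
    using assms(2) by (rule expansionsE)
  then show ?thesis using secw_closed valid_table_carrier[OF T] by simp
qed

lemma valid_table_expand_column:
  assumes T: "valid_table H d T" and c: "(v, g, u) \<in> T"
  shows "valid_table H d (expand_column d p s v g u T)"
    and "top_row (expand_column d p s v g u T) = (top_row T - {v}) \<union> (\<lambda>i. v @ [i]) ` {0..<d}"
proof -
  let ?new = "\<lambda>i. (v @ [i], s g i, u @ [p g i])"
  have g: "g \<in> carrier H" using valid_table_carrier[OF T c] .
  have inj_top: "inj_on (\<lambda>(v, g, u). v) T" and inj_bot: "inj_on (\<lambda>(v, g, u). u) T"
    using T unfolding valid_table_def by blast+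
  have "(\<lambda>(v, g, u). u) ` ?new ` {0..<d} = (\<lambda>i. u @ [i]) ` p g ` {0..<d}"
    by (simp add: image_image)
  also have "p g ` {0..<d} = {0..<d}" using perm_bij[OF g] by (simp add: bij_betw_def)
  finally have new_bottom: "(\<lambda>(v, g, u). u) ` ?new ` {0..<d} = (\<lambda>i. u @ [i]) ` {0..<d}" .
  show top: "top_row (expand_column d p s v g u T) = (top_row T - {v}) \<union> (\<lambda>i. v @ [i]) ` {0..<d}"
    unfolding expand_column_def image_replace_by_children[OF inj_top c] by (simp add: image_image)
  have bottom: "bottom_row (expand_column d p s v g u T) = (bottom_row T - {u}) \<union> (\<lambda>i. u @ [i]) ` {0..<d}"
    unfolding expand_column_def image_replace_by_children[OF inj_bot c] new_bottom by simp
  have "inj_on (\<lambda>(v, g, u). v) (expand_column d p s v g u T)"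
    unfolding expand_column_def
  proof (rule inj_on_replace_by_children[OF inj_top c, of id])
    fix t assume "t \<in> T" "prefix ((\<lambda>(v, g, u). v) (v, g, u)) ((\<lambda>(v, g, u). v) t)"
    then show "t = (v, g, u)" using valid_table_top_prefix[OF T c] by (cases t) simp
  qed auto
  moreover have "inj_on (\<lambda>(v, g, u). u) (expand_column d p s v g u T)"
    unfolding expand_column_def
  proof (rule inj_on_replace_by_children[OF inj_bot c, of "p g"])
    show "inj_on (p g) {0..<d}" using perm_bij[OF g] by (simp add: bij_betw_def)
    fix t assume "t \<in> T" "prefix ((\<lambda>(v, g, u). u) (v, g, u)) ((\<lambda>(v, g, u). u) t)"
    then show "t = (v, g, u)" using valid_table_bottom_prefix[OF T c] by (cases t) simp
  qed auto
  moreover have "\<forall>(v', g', u') \<in> expand_column d p s v g u T. g' \<in> carrier H"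
    using valid_table_carrier[OF T] sec_closed[OF g] unfolding expand_column_def by auto
  moreover have "finite (expand_column d p s v g u T)"
    using valid_table_finite[OF T] unfolding expand_column_def by blast
  ultimately show "valid_table H d (expand_column d p s v g u T)"
    unfolding valid_table_def top bottom
    using complete_antichain_expand valid_table_top_row[OF T] valid_table_bottom_row[OF T]
      top_rowI[OF c] bottom_rowI[OF c] by blast
qed

lemma table_rel_expand_column:
  assumes "valid_table H d T" "(v, g, u) \<in> T"
  shows "(T, expand_column d p s v g u T) \<in> table_rel H d p s"
proof -
  have "expand1 d p s T (expand_column d p s v g u T)"
    unfolding expand1_iff using assms(2) by blast
  then show ?thesis
    using assms valid_table_expand_column(1)[OF assms] unfolding table_rel_def by auto
qed

end

definition restrict_table :: "nat list set \<Rightarrow> 'a table \<Rightarrow> 'a table" where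
  "restrict_table B X = {t \<in> X. fst t \<in> B}"

lemma restrict_expansions_top_row:
  assumes T: "valid_table H d T"
  shows "restrict_table (top_row T) (expansions d p s T) = T"
proof
  show "restrict_table (top_row T) (expansions d p s T) \<subseteq> T"
  proof
    fix t assume t: "t \<in> restrict_table (top_row T) (expansions d p s T)"
    obtain x a y where xay: "t = (x, a, y)" by (cases t)
    then have "(x, a, y) \<in> expansions d p s T" "x \<in> top_row T"
      using t unfolding restrict_table_def by auto
    then obtain v g u w g' u' where c: "(v, g, u) \<in> T" "x = v @ w" "a = secw s g w"
      "y = u @ act p s g w" and c': "(x, g', u') \<in> T"
      by (auto elim!: expansionsE top_rowE)
    have "(x, g', u') = (v, g, u)"
      using valid_table_top_prefix[OF T c(1) c'] c(2) by (simp add: prefixI)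
    then have "w = []" using c(2) by simp
    then show "t \<in> T" using xay c by simp
  qed
  show "T \<subseteq> restrict_table (top_row T) (expansions d p s T)"
    using subset_expansions unfolding restrict_table_def by force
qed

lemma top_row_restrict_expansions:
  assumes B: "B \<subseteq> lists {0..<d}" and below: "\<forall>b\<in>B. \<exists>v\<in>top_row T. prefix v b"
  shows "top_row (restrict_table B (expansions d p s T)) = B"
proof
  show "top_row (restrict_table B (expansions d p s T)) \<subseteq> B"
  proof
    fix x assume "x \<in> top_row (restrict_table B (expansions d p s T))"
    then obtain a y where "(x, a, y) \<in> restrict_table B (expansions d p s T)"
      by (rule top_rowE)
    then show "x \<in> B" unfolding restrict_table_def by simp
  qed
  show "B \<subseteq> top_row (restrict_table B (expansions d p s T))"
  proof
    fix b assume b: "b \<in> B"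
    obtain v where v: "v \<in> top_row T" "prefix v b" using below b by blast
    obtain g u where c: "(v, g, u) \<in> T" using v(1) by (rule top_rowE)
    obtain w where w: "b = v @ w" using v(2) by (rule prefixE)
    have "w \<in> lists {0..<d}" using B b w by auto
    from expansionsI[OF c this] have "(b, secw s g w, u @ act p s g w) \<in> restrict_table B (expansions d p s T)"
      using b unfolding w restrict_table_def by simp
    then show "b \<in> top_row (restrict_table B (expansions d p s T))" by (rule top_rowI)
  qed
qed

lemma restrict_expansions_expand_column:
  assumes c: "(v, g, u) \<in> T" and vB: "v \<notin> B"
  shows "restrict_table B (expansions d p s (expand_column d p s v g u T)) =
    restrict_table B (expansions d p s T)"
proof -
  have "expansions d p s (expand_column d p s v g u T) \<subseteq> expansions d p s T"
    "expansions d p s T \<subseteq> insert (v, g, u) (expansions d p s (expand_column d p s v g u T))"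
    using expansions_expand_column_subset[OF c] expansions_subset_expand_column[OF c] by blast+
  then show ?thesis using vB unfolding restrict_table_def by auto
qed

(* The words lying between the top row of T and the antichain B; expanding a column of T
   strictly above B removes its top word from this set, which makes refinement terminate. *)
definition words_between :: "nat list set \<Rightarrow> 'a table \<Rightarrow> nat list set" where
  "words_between B T = {x. (\<exists>b\<in>B. prefix x b) \<and> (\<exists>v\<in>top_row T. prefix v x)}"

lemma finite_words_between:
  assumes "finite B" shows "finite (words_between B T)"
proof (rule finite_subset)
  show "words_between B T \<subseteq> (\<Union>b\<in>B. set (prefixes b))" unfolding words_between_def by auto
  show "finite (\<Union>b\<in>B. set (prefixes b))" using assms by simp
qed

lemma level_below_top_row:
  assumes d: "0 < d" and T: "valid_table H d T" and N: "\<forall>v\<in>top_row T. length v \<le> N"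
  shows "\<forall>b\<in>level d N. \<exists>v\<in>top_row T. prefix v b"
  using complete_antichain_has_prefix[OF valid_table_top_row[OF T] d] N unfolding level_def by auto

context wreath_recursion_magma
begin

lemma words_between_expand_column:
  assumes T: "valid_table H d T" and c: "(v, g, u) \<in> T" and b: "b \<in> B" "prefix v b"
  shows "words_between B (expand_column d p s v g u T) \<subset> words_between B T"
proof -
  note top' = valid_table_expand_column(2)[OF T c]
  have v: "v \<in> top_row T" using top_rowI[OF c] .
  have "words_between B (expand_column d p s v g u T) \<subseteq> words_between B T"
  proof
    fix x assume "x \<in> words_between B (expand_column d p s v g u T)"
    then obtain b' v' where "b' \<in> B" "prefix x b'" "v' \<in> top_row (expand_column d p s v g u T)"
      "prefix v' x"
      unfolding words_between_def by blast
    moreover from this(3) have "\<exists>v''\<in>top_row T. prefix v'' v'"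
      using v unfolding top' by (blast intro: prefixI)
    ultimately show "x \<in> words_between B T"
      unfolding words_between_def using prefix_order.trans by blast
  qed
  moreover have "\<not> prefix v' v" if "v' \<in> top_row (expand_column d p s v g u T)" for v'
  proof
    assume v'v: "prefix v' v"
    from that consider "v' \<in> top_row T" "v' \<noteq> v" | i where "v' = v @ [i]" unfolding top' by blast
    then show False
    proof cases
      case 1
      then show False using v'v complete_antichain_prefix_eq[OF valid_table_top_row[OF T] _ v] by blast
    next
      case 2
      then show False using prefix_length_le[OF v'v] by simp
    qed
  qed
  then have "v \<in> words_between B T - words_between B (expand_column d p s v g u T)"
    using v b prefix_order.refl[of v] unfolding words_between_def by blast
  ultimately show ?thesis by blast
qed

lemma below_expand_column:
  assumes B: "complete_antichain d B" and T: "valid_table H d T" and c: "(v, g, u) \<in> T"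
    and vB: "v \<notin> B" and below: "\<forall>b\<in>B. \<exists>v'\<in>top_row T. prefix v' b"
  shows "\<forall>b\<in>B. \<exists>v'\<in>top_row (expand_column d p s v g u T). prefix v' b"
proof
  fix b assume b: "b \<in> B"
  then obtain v' where v': "v' \<in> top_row T" "prefix v' b" using below by blast
  note top' = valid_table_expand_column(2)[OF T c]
  show "\<exists>v'\<in>top_row (expand_column d p s v g u T). prefix v' b"
  proof (cases "v' = v")
    case True
    then obtain r where r: "b = v @ r" using v'(2) by (auto elim: prefixE)
    with b vB obtain i r' where ir: "r = i # r'" by (cases r) auto
    have "i < d" using complete_antichain_lists[OF B b] r ir by simp
    then have "v @ [i] \<in> top_row (expand_column d p s v g u T)" unfolding top' by simp
    moreover have "prefix (v @ [i]) b" using r ir by simp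
    ultimately show ?thesis by blast
  qed (use v' top' in blast)
qed

lemma table_rel_restrict_expansions:
  assumes d: "0 < d" and B: "complete_antichain d B"
  shows "valid_table H d T \<Longrightarrow> \<forall>b\<in>B. \<exists>v\<in>top_row T. prefix v b \<Longrightarrow>
    (T, restrict_table B (expansions d p s T)) \<in> table_rel H d p s"
proof (induction "card (words_between B T)" arbitrary: T rule: less_induct)
  case less
  note T = less.prems(1) and below = less.prems(2)
  show ?case
  proof (cases "B \<subseteq> top_row T")
    case True
    then have "B = top_row T"
      using complete_antichain_subset_eq[OF d B valid_table_top_row[OF T]] by blast
    then show ?thesis using restrict_expansions_top_row[OF T] table_rel_refl[OF T] by simp
  next
    case False
    then obtain b where b: "b \<in> B" "b \<notin> top_row T" by blast
    obtain v where v: "v \<in> top_row T" "prefix v b" using below b(1) by blast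
    obtain g u where c: "(v, g, u) \<in> T" using v(1) by (rule top_rowE)
    have vB: "v \<notin> B" using complete_antichain_prefix_eq[OF B _ b(1) v(2)] v(1) b(2) by blast
    have "card (words_between B (expand_column d p s v g u T)) < card (words_between B T)"
      using finite_words_between[OF complete_antichain_finite[OF B]]
        words_between_expand_column[OF T c b(1) v(2)] by (rule psubset_card_mono)
    from less.hyps[OF this valid_table_expand_column(1)[OF T c] below_expand_column[OF B T c vB below]]
    show ?thesis
      using table_rel_trans[OF table_rel_expand_column[OF T c]]
      unfolding restrict_expansions_expand_column[OF c vB] by simp
  qed
qed

lemma table_rel_level:
  assumes d: "0 < d" and T: "valid_table H d T" and N: "\<forall>v\<in>top_row T. length v \<le> N"
  shows "(T, restrict_table (level d N) (expansions d p s T)) \<in> table_rel H d p s"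
  using table_rel_restrict_expansions[OF d complete_antichain_level T level_below_top_row[OF d T N]] .

(* For d = 0 the only word is [], so a nonempty valid table is a single column, and
   expanding it leaves the empty table. *)
lemma table_rel_empty_if_degree_zero:
  assumes d: "d = 0" and T: "valid_table H d T"
  shows "(T, {}) \<in> table_rel H d p s"
proof (cases "T = {}")
  case False
  then obtain v g u where c: "(v, g, u) \<in> T" by auto
  have nil: "v' = []" if "(v', g', u') \<in> T" for v' g' u'
    using valid_table_top_lists[OF T that] d by (cases v') auto
  have "t = (v, g, u)" if "t \<in> T" for t
  proof -
    obtain v' g' u' where t: "t = (v', g', u')" by (cases t)
    with that have "v' = v" using nil[of v' g' u'] nil[OF c] by simp
    then show ?thesis using valid_table_top_unique[OF T c] that t by simp
  qed
  then have "expand_column d p s v g u T = {}"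
    unfolding expand_column_def d by auto
  then show ?thesis using table_rel_expand_column[OF T c] by simp
qed (use table_rel_refl[OF T] in simp)

lemma table_rel_iff_eventually_equiv:
  "(T, T') \<in> table_rel H d p s \<longleftrightarrow>
    valid_table H d T \<and> valid_table H d T' \<and> eventually_equiv d p s T T'"
proof (intro iffI conjI)
  assume "valid_table H d T \<and> valid_table H d T' \<and> eventually_equiv d p s T T'"
  then have T: "valid_table H d T" and T': "valid_table H d T'"
    and "eventually_equiv d p s T T'" by blast+
  then obtain M where M: "agree_beyond M (expansions d p s T) (expansions d p s T')"
    unfolding eventually_equiv_def by blast
  show "(T, T') \<in> table_rel H d p s"
  proof (cases "d = 0")
    case True
    then show ?thesis using table_rel_empty_if_degree_zero T T' table_rel_sym table_rel_trans by metis
  next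
    case False
    obtain N1 where N1: "\<forall>v\<in>top_row T. length v \<le> N1" using valid_table_top_length_bound[OF T] .
    obtain N2 where N2: "\<forall>v\<in>top_row T'. length v \<le> N2" using valid_table_top_length_bound[OF T'] .
    define N where "N = max M (max N1 N2)"
    have "\<forall>v\<in>top_row T. length v \<le> N" "\<forall>v\<in>top_row T'. length v \<le> N"
      using N1 N2 unfolding N_def by (auto simp: le_max_iff_disj)
    then have "(T, restrict_table (level d N) (expansions d p s T)) \<in> table_rel H d p s"
      and "(T', restrict_table (level d N) (expansions d p s T')) \<in> table_rel H d p s"
      using table_rel_level[OF _ T] table_rel_level[OF _ T'] False by simp_all
    moreover have "restrict_table (level d N) (expansions d p s T) =
        restrict_table (level d N) (expansions d p s T')"
      using M unfolding restrict_table_def agree_beyond_def level_def N_def by auto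
    ultimately show ?thesis using table_rel_sym table_rel_trans by metis
  qed
qed (use table_rel_valid eventually_equiv_if_table_rel in blast)+

end

section \<open>Composition of tables\<close>

lemma compose_tablesI:
  "(w, g, u) \<in> T1 \<Longrightarrow> (v, h, w) \<in> T2 \<Longrightarrow> (v, g \<otimes>\<^bsub>H\<^esub> h, u) \<in> compose_tables H T1 T2"
  unfolding compose_tables_def by blast

lemma compose_tablesE:
  assumes "(v, k, u) \<in> compose_tables H T1 T2"
  obtains g h w where "(w, g, u) \<in> T1" "(v, h, w) \<in> T2" "k = g \<otimes>\<^bsub>H\<^esub> h"
  using assms unfolding compose_tables_def by blast

lemma top_row_compose_tables:
  assumes "top_row T1 = bottom_row T2"
  shows "top_row (compose_tables H T1 T2) = top_row T2"
proof
  show "top_row (compose_tables H T1 T2) \<subseteq> top_row T2"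
    unfolding compose_tables_def by force
  show "top_row T2 \<subseteq> top_row (compose_tables H T1 T2)"
  proof
    fix v assume "v \<in> top_row T2"
    then obtain h w where c2: "(v, h, w) \<in> T2" by (rule top_rowE)
    then have "w \<in> top_row T1" using assms bottom_rowI by metis
    then obtain g u where "(w, g, u) \<in> T1" by (rule top_rowE)
    from compose_tablesI[OF this c2] show "v \<in> top_row (compose_tables H T1 T2)" by (rule top_rowI)
  qed
qed

lemma bottom_row_compose_tables:
  assumes "top_row T1 = bottom_row T2"
  shows "bottom_row (compose_tables H T1 T2) = bottom_row T1"
proof
  show "bottom_row (compose_tables H T1 T2) \<subseteq> bottom_row T1"
    unfolding compose_tables_def by force
  show "bottom_row T1 \<subseteq> bottom_row (compose_tables H T1 T2)"
  proof
    fix u assume "u \<in> bottom_row T1"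
    then obtain w g where c1: "(w, g, u) \<in> T1" by (rule bottom_rowE)
    then have "w \<in> bottom_row T2" using assms top_rowI by metis
    then obtain v h where "(v, h, w) \<in> T2" by (rule bottom_rowE)
    from compose_tablesI[OF c1 this] show "u \<in> bottom_row (compose_tables H T1 T2)" by (rule bottom_rowI)
  qed
qed

lemma finite_compose_tables: "finite T1 \<Longrightarrow> finite T2 \<Longrightarrow> finite (compose_tables H T1 T2)"
proof -
  assume "finite T1" "finite T2"
  moreover have "compose_tables H T1 T2 \<subseteq> (\<lambda>((w, g, u), (v, h, w')). (v, g \<otimes>\<^bsub>H\<^esub> h, u)) ` (T1 \<times> T2)"
    unfolding compose_tables_def by force
  ultimately show ?thesis using finite_subset by blast
qed

lemma inj_on_top_compose_tables:
  assumes T1: "valid_table H d T1" and T2: "valid_table H d T2"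
  shows "inj_on (\<lambda>(v, k, u). v) (compose_tables H T1 T2)"
proof (rule inj_onI)
  fix x y assume x: "x \<in> compose_tables H T1 T2" and y: "y \<in> compose_tables H T1 T2"
    and xy: "(\<lambda>(v, k, u). v) x = (\<lambda>(v, k, u). v) y"
  obtain v k u v' k' u' where xy': "x = (v, k, u)" "y = (v', k', u')" by (cases x, cases y)
  obtain g h w where c: "(w, g, u) \<in> T1" "(v, h, w) \<in> T2" "k = g \<otimes>\<^bsub>H\<^esub> h"
    using x unfolding xy' by (rule compose_tablesE)
  obtain g' h' w' where c': "(w', g', u') \<in> T1" "(v', h', w') \<in> T2" "k' = g' \<otimes>\<^bsub>H\<^esub> h'"
    using y unfolding xy' by (rule compose_tablesE)
  have "v' = v" using xy unfolding xy' by simp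
  then have "h' = h \<and> w' = w" using valid_table_top_unique[OF T2 c(2)] c'(2) by simp
  then have "g' = g \<and> u' = u" using valid_table_top_unique[OF T1 c(1)] c'(1) by simp
  then show "x = y" using xy' c c' \<open>v' = v\<close> \<open>h' = h \<and> w' = w\<close> by simp
qed

lemma inj_on_bottom_compose_tables:
  assumes T1: "valid_table H d T1" and T2: "valid_table H d T2"
  shows "inj_on (\<lambda>(v, k, u). u) (compose_tables H T1 T2)"
proof (rule inj_onI)
  fix x y assume x: "x \<in> compose_tables H T1 T2" and y: "y \<in> compose_tables H T1 T2"
    and xy: "(\<lambda>(v, k, u). u) x = (\<lambda>(v, k, u). u) y"
  obtain v k u v' k' u' where xy': "x = (v, k, u)" "y = (v', k', u')" by (cases x, cases y)
  obtain g h w where c: "(w, g, u) \<in> T1" "(v, h, w) \<in> T2" "k = g \<otimes>\<^bsub>H\<^esub> h"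
    using x unfolding xy' by (rule compose_tablesE)
  obtain g' h' w' where c': "(w', g', u') \<in> T1" "(v', h', w') \<in> T2" "k' = g' \<otimes>\<^bsub>H\<^esub> h'"
    using y unfolding xy' by (rule compose_tablesE)
  have "u' = u" using xy unfolding xy' by simp
  then have "w' = w \<and> g' = g" using valid_table_bottom_unique[OF T1 c(1)] c'(1) by simp
  then have "v' = v \<and> h' = h" using valid_table_bottom_unique[OF T2 c(2)] c'(2) by simp
  then show "x = y" using xy' c c' \<open>u' = u\<close> \<open>w' = w \<and> g' = g\<close> by simp
qed

lemma (in wreath_recursion_magma) valid_table_compose_tables:
  assumes T1: "valid_table H d T1" and T2: "valid_table H d T2"
    and match: "top_row T1 = bottom_row T2"
  shows "valid_table H d (compose_tables H T1 T2)"
proof -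
  have "\<forall>(v, k, u)\<in>compose_tables H T1 T2. k \<in> carrier H"
    using valid_table_carrier[OF T1] valid_table_carrier[OF T2] mult_closed
    by (auto elim: compose_tablesE)
  then show ?thesis
    unfolding valid_table_def top_row_compose_tables[OF match] bottom_row_compose_tables[OF match]
    using valid_table_top_row[OF T2] valid_table_bottom_row[OF T1]
      finite_compose_tables[OF valid_table_finite[OF T1] valid_table_finite[OF T2]]
      inj_on_top_compose_tables[OF T1 T2] inj_on_bottom_compose_tables[OF T1 T2] by blast
qed

lemma agree_beyond_compose_tables:
  assumes agree1: "agree_beyond M1 X1 Y1" and agree2: "agree_beyond M2 X2 Y2"
    and short: "\<forall>(x, h, y) \<in> X2 \<union> Y2. length x \<le> length y + L"
  shows "agree_beyond (M1 + M2 + L) (compose_tables H X1 X2) (compose_tables H Y1 Y2)"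
proof -
  have transfer: "(x, k, z) \<in> compose_tables H Y1 Y2"
    if xkz: "(x, k, z) \<in> compose_tables H X1 X2" and long: "M1 + M2 + L \<le> length x"
      and a1: "agree_beyond M1 X1 Y1" and a2: "agree_beyond M2 X2 Y2"
      and sh: "\<forall>(x, h, y) \<in> X2. length x \<le> length y + L"
    for X1 X2 Y1 Y2 x k z
  proof -
    obtain g h y where c: "(y, g, z) \<in> X1" "(x, h, y) \<in> X2" "k = g \<otimes>\<^bsub>H\<^esub> h"
      using xkz by (rule compose_tablesE)
    have "length x \<le> length y + L" using sh c(2) by auto
    then have "(y, g, z) \<in> Y1" and "(x, h, y) \<in> Y2"
      using long a1 a2 c(1,2) unfolding agree_beyond_def by auto
    then show ?thesis unfolding c(3) by (rule compose_tablesI)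
  qed
  show ?thesis
    unfolding agree_beyond_def
  proof (intro allI impI iffI)
    fix x :: "nat list" and k z assume "M1 + M2 + L \<le> length x"
    then show "(x, k, z) \<in> compose_tables H X1 X2 \<Longrightarrow> (x, k, z) \<in> compose_tables H Y1 Y2"
      and "(x, k, z) \<in> compose_tables H Y1 Y2 \<Longrightarrow> (x, k, z) \<in> compose_tables H X1 X2"
      using transfer[of x k z X1 X2 Y1 Y2] transfer[of x k z Y1 Y2 X1 X2] agree1 agree2 short
      unfolding agree_beyond_def by (blast, blast)
  qed
qed

context wreath_recursion_magma
begin

lemma expansions_compose_tables_subset:
  assumes T1: "valid_table H d T1" and T2: "valid_table H d T2"
  shows "expansions d p s (compose_tables H T1 T2) \<subseteq>
    compose_tables H (expansions d p s T1) (expansions d p s T2)"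
proof
  fix t assume "t \<in> expansions d p s (compose_tables H T1 T2)"
  then obtain v k u w where c: "(v, k, u) \<in> compose_tables H T1 T2" "w \<in> lists {0..<d}"
    and t: "t = (v @ w, secw s k w, u @ act p s k w)"
    unfolding expansions_def by blast
  obtain g h w0 where c1: "(w0, g, u) \<in> T1" and c2: "(v, h, w0) \<in> T2" and k: "k = g \<otimes> h"
    using c(1) by (rule compose_tablesE)
  have g: "g \<in> carrier H" and h: "h \<in> carrier H"
    using valid_table_carrier[OF T1 c1] valid_table_carrier[OF T2 c2] .
  have "(v @ w, secw s h w, w0 @ act p s h w) \<in> expansions d p s T2"
    using expansionsI[OF c2 c(2)] .
  moreover have "(w0 @ act p s h w, secw s g (act p s h w), u @ act p s g (act p s h w))
      \<in> expansions d p s T1"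
    using expansionsI[OF c1 act_lists[OF h c(2)]] .
  ultimately show "t \<in> compose_tables H (expansions d p s T1) (expansions d p s T2)"
    unfolding t k secw_mult[OF g h c(2)] act_mult[OF g h c(2)] by (rule compose_tablesI[rotated])
qed

lemma compose_tables_expansions_subset:
  assumes T1: "valid_table H d T1" and T2: "valid_table H d T2"
    and match: "top_row T1 = bottom_row T2"
  shows "compose_tables H (expansions d p s T1) (expansions d p s T2) \<subseteq>
    expansions d p s (compose_tables H T1 T2)"
proof
  fix t assume "t \<in> compose_tables H (expansions d p s T1) (expansions d p s T2)"
  then obtain x y z g h where e1: "(y, g, z) \<in> expansions d p s T1"
    and e2: "(x, h, y) \<in> expansions d p s T2" and t: "t = (x, g \<otimes> h, z)"
    unfolding compose_tables_def by blast
  obtain v h0 w0 w where c2: "(v, h0, w0) \<in> T2" "w \<in> lists {0..<d}"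
    "x = v @ w" "h = secw s h0 w" "y = w0 @ act p s h0 w"
    using e2 by (rule expansionsE)
  obtain v1 g0 u w1 where c1: "(v1, g0, u) \<in> T1" "w1 \<in> lists {0..<d}"
    "y = v1 @ w1" "g = secw s g0 w1" "z = u @ act p s g0 w1"
    using e1 by (rule expansionsE)
  have "w0 \<in> top_row T1" using bottom_rowI[OF c2(1)] match by simp
  moreover have "prefix w0 y" using c2(5) by (rule prefixI)
  moreover have "prefix v1 y" using c1(3) by (rule prefixI)
  ultimately have "v1 = w0"
    using complete_antichain_common_prefix_eq[OF valid_table_top_row[OF T1] top_rowI[OF c1(1)]] by blast
  then have w1: "w1 = act p s h0 w" using c1(3) c2(5) by simp
  have g0: "g0 \<in> carrier H" and h0: "h0 \<in> carrier H"
    using valid_table_carrier[OF T1 c1(1)] valid_table_carrier[OF T2 c2(1)] .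
  have "(v, g0 \<otimes> h0, u) \<in> compose_tables H T1 T2"
    using compose_tablesI[OF c1(1)[unfolded \<open>v1 = w0\<close>] c2(1)] .
  then have "(v @ w, secw s (g0 \<otimes> h0) w, u @ act p s (g0 \<otimes> h0) w)
      \<in> expansions d p s (compose_tables H T1 T2)"
    using c2(2) by (rule expansionsI)
  then show "t \<in> expansions d p s (compose_tables H T1 T2)"
    unfolding t c2(3,4) c1(4,5) w1 secw_mult[OF g0 h0 c2(2)] act_mult[OF g0 h0 c2(2)] .
qed

lemma expansions_compose_tables:
  assumes "valid_table H d T1" "valid_table H d T2" "top_row T1 = bottom_row T2"
  shows "expansions d p s (compose_tables H T1 T2) =
    compose_tables H (expansions d p s T1) (expansions d p s T2)"
  using expansions_compose_tables_subset[OF assms(1,2)] compose_tables_expansions_subset[OF assms]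
  by (rule equalityI)

lemma table_rel_compose_tables:
  assumes rel1: "(T1, T1') \<in> table_rel H d p s" and rel2: "(T2, T2') \<in> table_rel H d p s"
    and match: "top_row T1 = bottom_row T2" and match': "top_row T1' = bottom_row T2'"
  shows "(compose_tables H T1 T2, compose_tables H T1' T2') \<in> table_rel H d p s"
proof -
  have T1: "valid_table H d T1" "valid_table H d T1'"
    and T2: "valid_table H d T2" "valid_table H d T2'"
    using rel1 rel2 table_rel_valid by blast+
  obtain M1 where M1: "agree_beyond M1 (expansions d p s T1) (expansions d p s T1')"
    using rel1 unfolding table_rel_iff_eventually_equiv eventually_equiv_def by blast
  obtain M2 where M2: "agree_beyond M2 (expansions d p s T2) (expansions d p s T2')"
    using rel2 unfolding table_rel_iff_eventually_equiv eventually_equiv_def by blast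
  obtain L where L: "\<forall>v\<in>top_row T2. length v \<le> L" using valid_table_top_length_bound[OF T2(1)] .
  obtain L' where L': "\<forall>v\<in>top_row T2'. length v \<le> L'" using valid_table_top_length_bound[OF T2(2)] .
  have short: "\<forall>(x, a, y) \<in> expansions d p s T2 \<union> expansions d p s T2'. length x \<le> length y + (L + L')"
    using expansions_length_le[OF _ L] expansions_length_le[OF _ L'] by fastforce
  from agree_beyond_compose_tables[OF M1 M2 short]
  have "eventually_equiv d p s (compose_tables H T1 T2) (compose_tables H T1' T2')"
    unfolding eventually_equiv_def expansions_compose_tables[OF T1(1) T2(1) match]
      expansions_compose_tables[OF T1(2) T2(2) match'] by blast
  then show ?thesis
    using table_rel_iff_eventually_equiv valid_table_compose_tables T1 T2 match match' by blast
qed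

lemma exists_composable_representatives:
  assumes T1: "valid_table H d T1" and T2: "valid_table H d T2"
  obtains S1 S2 where "(T1, S1) \<in> table_rel H d p s" "(T2, S2) \<in> table_rel H d p s"
    "top_row S1 = bottom_row S2"
proof (cases "d = 0")
  case True
  then show ?thesis
    using that table_rel_empty_if_degree_zero[OF _ T1] table_rel_empty_if_degree_zero[OF _ T2] by simp
next
  case False
  then have d: "0 < d" by simp
  obtain N where N: "\<forall>v\<in>top_row T1. length v \<le> N" using valid_table_top_length_bound[OF T1] .
  obtain L where L: "\<forall>v\<in>top_row T2. length v \<le> L" using valid_table_top_length_bound[OF T2] .
  define S2 where "S2 = restrict_table (level d (N + L)) (expansions d p s T2)"
  have "\<forall>v\<in>top_row T2. length v \<le> N + L" using L by fastforce
  then have rel2: "(T2, S2) \<in> table_rel H d p s"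
    unfolding S2_def by (rule table_rel_level[OF d T2])
  have B: "complete_antichain d (bottom_row S2)"
    using valid_table_bottom_row table_rel_valid[OF rel2] by blast
  have long: "N \<le> length u" if u: "u \<in> bottom_row S2" for u
  proof -
    obtain x k where "(x, k, u) \<in> S2" using u by (rule bottom_rowE)
    then have "(x, k, u) \<in> expansions d p s T2" "length x = N + L"
      unfolding S2_def restrict_table_def level_def by auto
    then show ?thesis using expansions_length_le[OF _ L] by fastforce
  qed
  have below: "\<forall>b\<in>bottom_row S2. \<exists>v\<in>top_row T1. prefix v b"
  proof
    fix b assume b: "b \<in> bottom_row S2"
    show "\<exists>v\<in>top_row T1. prefix v b"
      using complete_antichain_has_prefix[OF valid_table_top_row[OF T1] d
          complete_antichain_lists[OF B b]] N long[OF b] by fastforce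
  qed
  define S1 where "S1 = restrict_table (bottom_row S2) (expansions d p s T1)"
  have rel1: "(T1, S1) \<in> table_rel H d p s"
    unfolding S1_def by (rule table_rel_restrict_expansions[OF d B T1 below])
  have "bottom_row S2 \<subseteq> lists {0..<d}" using complete_antichain_lists[OF B] by blast
  then have "top_row S1 = bottom_row S2"
    unfolding S1_def by (rule top_row_restrict_expansions[OF _ below])
  with rel1 rel2 show ?thesis by (rule that)
qed

lemma carrier_V_group:
  "carrier (V_group H d p s) = (\<lambda>T. table_rel H d p s `` {T}) ` {T. valid_table H d T}"
  unfolding V_group_def quotient_def by auto

lemma V_group_mult:
  assumes rel1: "(T1, S1) \<in> table_rel H d p s" and rel2: "(T2, S2) \<in> table_rel H d p s"
    and match: "top_row S1 = bottom_row S2"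
  shows "table_rel H d p s `` {T1} \<otimes>\<^bsub>V_group H d p s\<^esub> table_rel H d p s `` {T2} =
    table_rel H d p s `` {compose_tables H S1 S2}"
proof -
  let ?cls = "\<lambda>T. table_rel H d p s `` {T}"
  let ?P = "\<lambda>C. \<exists>X1\<in>?cls T1. \<exists>X2\<in>?cls T2. top_row X1 = bottom_row X2 \<and>
    C = ?cls (compose_tables H X1 X2)"
  have "?P (?cls (compose_tables H S1 S2))" using rel1 rel2 match by blast
  then have "?P (SOME C. ?P C)" by (rule someI)
  then obtain X1 X2 where X: "(T1, X1) \<in> table_rel H d p s" "(T2, X2) \<in> table_rel H d p s"
    "top_row X1 = bottom_row X2" "(SOME C. ?P C) = ?cls (compose_tables H X1 X2)"
    by blast
  have "(S1, X1) \<in> table_rel H d p s" "(S2, X2) \<in> table_rel H d p s"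
    using table_rel_trans[OF table_rel_sym] rel1 rel2 X(1,2) by blast+
  then have "(compose_tables H S1 S2, compose_tables H X1 X2) \<in> table_rel H d p s"
    using table_rel_compose_tables match X(3) by blast
  then have "?cls (compose_tables H S1 S2) = ?cls (compose_tables H X1 X2)"
    by (rule equiv_class_eq[OF equiv_table_rel])
  then show ?thesis using X(4) unfolding V_group_def by simp
qed

end

section \<open>The natural map to the faithful quotient\<close>

lemma actbar_apply: "w \<in> lists {0..<d} \<Longrightarrow> actbar d p s g w = act p s g w"
  unfolding actbar_def by simp

lemma permbar_actbar: "i < d \<Longrightarrow> permbar (actbar d p s g) i = p g i"
  unfolding permbar_def by (simp add: actbar_apply)

lemma secbar_actbar: "i < d \<Longrightarrow> secbar d (actbar d p s g) i = actbar d p s (s g i)"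
  unfolding secbar_def actbar_def by (auto simp: fun_eq_iff)

lemma carrier_Gbar: "carrier (Gbar H d p s) = actbar d p s ` carrier H"
  unfolding Gbar_def by simp

definition map_table :: "('g \<Rightarrow> 'h) \<Rightarrow> 'g table \<Rightarrow> 'h table" where
  "map_table f T = (\<lambda>(v, g, u). (v, f g, u)) ` T"

lemma map_tableI: "(v, g, u) \<in> T \<Longrightarrow> (v, f g, u) \<in> map_table f T"
  unfolding map_table_def by force

lemma map_tableE:
  assumes "(v, k, u) \<in> map_table f T" obtains g where "(v, g, u) \<in> T" "k = f g"
  using assms unfolding map_table_def by force

lemma top_row_map_table [simp]: "top_row (map_table f T) = top_row T"
  and bottom_row_map_table [simp]: "bottom_row (map_table f T) = bottom_row T"
  unfolding map_table_def by (simp_all add: image_image case_prod_beta)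

lemma map_table_comp: "map_table f (map_table g T) = map_table (f \<circ> g) T"
  unfolding map_table_def by (simp add: image_image case_prod_beta)

lemma inj_on_map_table:
  assumes "inj_on r T" and "\<And>v g u. r' (v, f g, u) = r (v, g, u)"
  shows "inj_on r' (map_table f T)"
  unfolding map_table_def
proof (rule inj_on_imageI)
  have "inj_on (r' \<circ> (\<lambda>(v, g, u). (v, f g, u))) T = inj_on r T"
    by (rule inj_on_cong) (clarsimp simp: assms(2))
  then show "inj_on (r' \<circ> (\<lambda>(v, g, u). (v, f g, u))) T" using assms(1) by simp
qed

lemma valid_table_map_table:
  assumes T: "valid_table H d T" and f: "\<And>g. g \<in> carrier H \<Longrightarrow> f g \<in> carrier H'"
  shows "valid_table H' d (map_table f T)"
proof -
  have "inj_on (\<lambda>(v, g, u). v) (map_table f T)"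
    using T unfolding valid_table_def by (intro inj_on_map_table[where r = "\<lambda>(v, g, u). v"]) auto
  moreover have "inj_on (\<lambda>(v, g, u). u) (map_table f T)"
    using T unfolding valid_table_def by (intro inj_on_map_table[where r = "\<lambda>(v, g, u). u"]) auto
  moreover have "\<forall>(v, k, u) \<in> map_table f T. k \<in> carrier H'"
    using valid_table_carrier[OF T] f by (fastforce elim: map_tableE)
  moreover have "finite (map_table f T)"
    using valid_table_finite[OF T] by (simp add: map_table_def)
  ultimately show ?thesis
    using T unfolding valid_table_def by simp
qed

lemma agree_beyond_map_table:
  "agree_beyond M X Y \<Longrightarrow> agree_beyond M (map_table f X) (map_table f Y)"
  unfolding agree_beyond_def map_table_def by force

context wreath_recursion_magma
begin

abbreviation Hbar where "Hbar \<equiv> Gbar H d p s"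

lemma actbar_mult:
  assumes g: "g \<in> carrier H" and h: "h \<in> carrier H"
  shows "actbar d p s g \<otimes>\<^bsub>Hbar\<^esub> actbar d p s h = actbar d p s (g \<otimes> h)"
  using act_mult[OF g h] act_lists[OF h]
  unfolding Gbar_def actbar_def by (auto simp: fun_eq_iff)

lemma wreath_recursion_magma_Gbar: "wreath_recursion_magma Hbar d permbar (secbar d)"
proof
  fix f assume "f \<in> carrier Hbar"
  then obtain g where g: "g \<in> carrier H" and f: "f = actbar d p s g" unfolding carrier_Gbar by blast
  then show "bij_betw (permbar f) {0..<d} {0..<d}"
    using perm_bij[OF g] bij_betw_cong[of "{0..<d}" "permbar f" "p g"] by (simp add: permbar_actbar)
  fix i assume "i < d"
  then show "secbar d f i \<in> carrier Hbar"
    using g sec_closed f by (simp add: secbar_actbar carrier_Gbar)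
next
  fix f f' assume "f \<in> carrier Hbar" "f' \<in> carrier Hbar"
  then obtain g g' where g: "g \<in> carrier H" "f = actbar d p s g"
    and g': "g' \<in> carrier H" "f' = actbar d p s g'" unfolding carrier_Gbar by blast
  then show "f \<otimes>\<^bsub>Hbar\<^esub> f' \<in> carrier Hbar"
    using actbar_mult mult_closed by (simp add: carrier_Gbar)
  fix i assume i: "i < d"
  show "permbar (f \<otimes>\<^bsub>Hbar\<^esub> f') i = permbar f (permbar f' i)"
    using g g' i perm_mult perm_less by (simp add: actbar_mult permbar_actbar)
  show "secbar d (f \<otimes>\<^bsub>Hbar\<^esub> f') i = secbar d f (permbar f' i) \<otimes>\<^bsub>Hbar\<^esub> secbar d f' i"
    using g g' i sec_mult perm_less sec_closed
    by (simp add: actbar_mult permbar_actbar secbar_actbar)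
qed

lemma act_actbar:
  "g \<in> carrier H \<Longrightarrow> w \<in> lists {0..<d} \<Longrightarrow> act permbar (secbar d) (actbar d p s g) w = act p s g w"
  by (induction w arbitrary: g) (auto simp: permbar_actbar secbar_actbar sec_closed)

lemma secw_actbar:
  "g \<in> carrier H \<Longrightarrow> w \<in> lists {0..<d} \<Longrightarrow>
    secw (secbar d) (actbar d p s g) w = actbar d p s (secw s g w)"
  by (induction w arbitrary: g) (auto simp: secbar_actbar sec_closed)

lemma valid_table_map_actbar: "valid_table H d T \<Longrightarrow> valid_table Hbar d (map_table (actbar d p s) T)"
  by (rule valid_table_map_table) (auto simp: carrier_Gbar)

lemma expansions_map_actbar:
  assumes T: "valid_table H d T"
  shows "expansions d permbar (secbar d) (map_table (actbar d p s) T) =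
    map_table (actbar d p s) (expansions d p s T)"
proof (intro equalityI subsetI)
  fix t assume "t \<in> expansions d permbar (secbar d) (map_table (actbar d p s) T)"
  then obtain v k u w where c: "(v, k, u) \<in> map_table (actbar d p s) T" "w \<in> lists {0..<d}"
    and t: "t = (v @ w, secw (secbar d) k w, u @ act permbar (secbar d) k w)"
    unfolding expansions_def by blast
  obtain g where g: "(v, g, u) \<in> T" "k = actbar d p s g" using c(1) by (rule map_tableE)
  have "g \<in> carrier H" using valid_table_carrier[OF T g(1)] .
  then show "t \<in> map_table (actbar d p s) (expansions d p s T)"
    using map_tableI[OF expansionsI[OF g(1) c(2)]] unfolding t g(2)
    by (simp add: act_actbar secw_actbar c(2))
next
  fix t assume "t \<in> map_table (actbar d p s) (expansions d p s T)"
  moreover obtain x k y where t: "t = (x, k, y)" by (cases t)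
  ultimately obtain a where e: "(x, a, y) \<in> expansions d p s T" and k: "k = actbar d p s a"
    by (auto elim: map_tableE)
  obtain v g u w where c: "(v, g, u) \<in> T" "w \<in> lists {0..<d}"
    "x = v @ w" "a = secw s g w" "y = u @ act p s g w"
    using e by (rule expansionsE)
  have "g \<in> carrier H" using valid_table_carrier[OF T c(1)] .
  moreover have "(v @ w, secw (secbar d) (actbar d p s g) w, u @ act permbar (secbar d) (actbar d p s g) w)
      \<in> expansions d permbar (secbar d) (map_table (actbar d p s) T)"
    using map_tableI[OF c(1)] c(2) by (rule expansionsI)
  ultimately show "t \<in> expansions d permbar (secbar d) (map_table (actbar d p s) T)"
    unfolding t k c(3-5) by (simp add: act_actbar secw_actbar c(2))
qed

lemma table_rel_map_actbar:
  assumes "(T, T') \<in> table_rel H d p s"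
  shows "(map_table (actbar d p s) T, map_table (actbar d p s) T') \<in> table_rel Hbar d permbar (secbar d)"
proof -
  interpret bar: wreath_recursion_magma Hbar d permbar "secbar d" by (rule wreath_recursion_magma_Gbar)
  have T: "valid_table H d T" "valid_table H d T'" and "eventually_equiv d p s T T'"
    using assms unfolding table_rel_iff_eventually_equiv by blast+
  then obtain M where "agree_beyond M (expansions d p s T) (expansions d p s T')"
    unfolding eventually_equiv_def by blast
  then have "eventually_equiv d permbar (secbar d) (map_table (actbar d p s) T) (map_table (actbar d p s) T')"
    unfolding eventually_equiv_def expansions_map_actbar[OF T(1)] expansions_map_actbar[OF T(2)]
    by (blast intro: agree_beyond_map_table)
  then show ?thesis
    unfolding bar.table_rel_iff_eventually_equiv using valid_table_map_actbar T by blast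
qed

lemma natural_map_class:
  assumes T: "valid_table H d T"
  shows "natural_map H d p s (table_rel H d p s `` {T}) =
    table_rel Hbar d permbar (secbar d) `` {map_table (actbar d p s) T}"
proof -
  let ?T = "SOME T'. T' \<in> table_rel H d p s `` {T}"
  have "?T \<in> table_rel H d p s `` {T}"
    by (rule someI[of _ T]) (simp add: table_rel_refl[OF T])
  then have "(map_table (actbar d p s) T, map_table (actbar d p s) ?T) \<in> table_rel Hbar d permbar (secbar d)"
    by (simp add: table_rel_map_actbar)
  then show ?thesis
    unfolding natural_map_def map_table_def[symmetric] by (simp add: equiv_class_eq[OF equiv_table_rel])
qed

lemma same_image_beyond:
  assumes T2: "valid_table H d T2"
    and agree: "agree_beyond M (map_table (actbar d p s) (expansions d p s T1))
      (map_table (actbar d p s) (expansions d p s T2))"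
    and long: "M \<le> length v"
    and c: "(v, g, u) \<in> expansions d p s T1" and c': "(v, g', u') \<in> expansions d p s T2"
  shows "u' = u \<and> actbar d p s g' = actbar d p s g"
proof -
  have "(v, actbar d p s g, u) \<in> map_table (actbar d p s) (expansions d p s T2)"
    using agree long map_tableI[OF c] unfolding agree_beyond_def by blast
  then obtain g'' where c'': "(v, g'', u) \<in> expansions d p s T2" "actbar d p s g = actbar d p s g''"
    by (rule map_tableE)
  then show ?thesis using expansions_unique[OF T2 c' c''(1)] by simp
qed

lemma map_actbar_compose_tables:
  assumes T1: "valid_table H d T1" and T2: "valid_table H d T2"
  shows "map_table (actbar d p s) (compose_tables H T1 T2) =
    compose_tables Hbar (map_table (actbar d p s) T1) (map_table (actbar d p s) T2)"
proof (intro equalityI subsetI)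
  fix t assume "t \<in> map_table (actbar d p s) (compose_tables H T1 T2)"
  moreover obtain v k u where t: "t = (v, k, u)" by (cases t)
  ultimately obtain gh where "(v, gh, u) \<in> compose_tables H T1 T2" "k = actbar d p s gh"
    by (auto elim: map_tableE)
  moreover from this(1) obtain g h w where c: "(w, g, u) \<in> T1" "(v, h, w) \<in> T2" "gh = g \<otimes> h"
    by (rule compose_tablesE)
  ultimately show "t \<in> compose_tables Hbar (map_table (actbar d p s) T1) (map_table (actbar d p s) T2)"
    using compose_tablesI[OF map_tableI[OF c(1), of "actbar d p s"] map_tableI[OF c(2), of "actbar d p s"], of Hbar]
      actbar_mult valid_table_carrier[OF T1 c(1)] valid_table_carrier[OF T2 c(2)] t by simp
next
  fix t assume "t \<in> compose_tables Hbar (map_table (actbar d p s) T1) (map_table (actbar d p s) T2)"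
  moreover obtain v k u where t: "t = (v, k, u)" by (cases t)
  ultimately obtain f f' w where "(w, f, u) \<in> map_table (actbar d p s) T1"
    "(v, f', w) \<in> map_table (actbar d p s) T2" "k = f \<otimes>\<^bsub>Hbar\<^esub> f'"
    by (auto elim: compose_tablesE)
  then obtain g h where c: "(w, g, u) \<in> T1" "(v, h, w) \<in> T2"
    and k: "k = actbar d p s g \<otimes>\<^bsub>Hbar\<^esub> actbar d p s h"
    by (auto elim!: map_tableE)
  show "t \<in> map_table (actbar d p s) (compose_tables H T1 T2)"
    using map_tableI[OF compose_tablesI[OF c], of "actbar d p s"]
      actbar_mult valid_table_carrier[OF T1 c(1)] valid_table_carrier[OF T2 c(2)] t k by simp
qed

lemma lift_valid_table_Gbar:
  assumes S: "valid_table Hbar d S"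
  obtains T where "valid_table H d T" "map_table (actbar d p s) T = S"
proof
  define lift where "lift f = (SOME g. g \<in> carrier H \<and> actbar d p s g = f)" for f
  have lift: "lift f \<in> carrier H \<and> actbar d p s (lift f) = f" if f: "f \<in> carrier Hbar" for f
  proof -
    have "\<exists>g. g \<in> carrier H \<and> actbar d p s g = f" using f unfolding carrier_Gbar by blast
    then show ?thesis unfolding lift_def by (rule someI_ex)
  qed
  show "valid_table H d (map_table lift S)"
    using valid_table_map_table[OF S] lift by blast
  have "map_table (actbar d p s \<circ> lift) S = (\<lambda>t. t) ` S"
    unfolding map_table_def using lift valid_table_carrier[OF S]
    by (intro image_cong) (auto split: prod.splits)
  then show "map_table (actbar d p s) (map_table lift S) = S"
    by (simp add: map_table_comp)
qed

lemma natural_map_hom: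
  "natural_map H d p s \<in> hom (V_group H d p s) (V_group Hbar d permbar (secbar d))"
proof -
  interpret bar: wreath_recursion_magma Hbar d permbar "secbar d" by (rule wreath_recursion_magma_Gbar)
  let ?f = "natural_map H d p s" and ?m = "map_table (actbar d p s)"
  show ?thesis
  proof (rule homI)
    fix A assume "A \<in> carrier (V_group H d p s)"
    then obtain T where T: "valid_table H d T" "A = table_rel H d p s `` {T}"
      unfolding carrier_V_group by blast
    then show "?f A \<in> carrier (V_group Hbar d permbar (secbar d))"
      unfolding bar.carrier_V_group T(2) natural_map_class[OF T(1)]
      using valid_table_map_actbar by blast
  next
    fix A B assume "A \<in> carrier (V_group H d p s)" "B \<in> carrier (V_group H d p s)"
    then obtain T1 T2 where T1: "valid_table H d T1" "A = table_rel H d p s `` {T1}"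
      and T2: "valid_table H d T2" "B = table_rel H d p s `` {T2}"
      unfolding carrier_V_group by blast
    obtain S1 S2 where rel1: "(T1, S1) \<in> table_rel H d p s" and rel2: "(T2, S2) \<in> table_rel H d p s"
      and match: "top_row S1 = bottom_row S2"
      using exists_composable_representatives[OF T1(1) T2(1)] .
    have S: "valid_table H d S1" "valid_table H d S2" using rel1 rel2 table_rel_valid by blast+
    have match': "top_row (?m S1) = bottom_row (?m S2)" using match by simp
    have "?f (A \<otimes>\<^bsub>V_group H d p s\<^esub> B) =
        table_rel Hbar d permbar (secbar d) `` {?m (compose_tables H S1 S2)}"
      unfolding T1(2) T2(2) V_group_mult[OF rel1 rel2 match]
      by (rule natural_map_class[OF valid_table_compose_tables[OF S match]])
    also have "\<dots> = table_rel Hbar d permbar (secbar d) `` {compose_tables Hbar (?m S1) (?m S2)}"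
      unfolding map_actbar_compose_tables[OF S] ..
    also have "\<dots> = table_rel Hbar d permbar (secbar d) `` {?m T1} \<otimes>\<^bsub>V_group Hbar d permbar (secbar d)\<^esub>
        table_rel Hbar d permbar (secbar d) `` {?m T2}"
      by (rule bar.V_group_mult[OF table_rel_map_actbar[OF rel1] table_rel_map_actbar[OF rel2] match', symmetric])
    also have "\<dots> = ?f A \<otimes>\<^bsub>V_group Hbar d permbar (secbar d)\<^esub> ?f B"
      unfolding T1(2) T2(2) natural_map_class[OF T1(1)] natural_map_class[OF T2(1)] ..
    finally show "?f (A \<otimes>\<^bsub>V_group H d p s\<^esub> B) = ?f A \<otimes>\<^bsub>V_group Hbar d permbar (secbar d)\<^esub> ?f B" .
  qed
qed

lemma natural_map_surjective:
  "natural_map H d p s ` carrier (V_group H d p s) = carrier (V_group Hbar d permbar (secbar d))"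
proof -
  interpret bar: wreath_recursion_magma Hbar d permbar "secbar d" by (rule wreath_recursion_magma_Gbar)
  have "natural_map H d p s ` carrier (V_group H d p s) =
      (\<lambda>T. table_rel Hbar d permbar (secbar d) `` {map_table (actbar d p s) T}) ` {T. valid_table H d T}"
    unfolding carrier_V_group image_image by (rule image_cong) (simp_all add: natural_map_class)
  also have "\<dots> = carrier (V_group Hbar d permbar (secbar d))"
    unfolding bar.carrier_V_group
  proof
    show "(\<lambda>T. table_rel Hbar d permbar (secbar d) `` {map_table (actbar d p s) T}) ` {T. valid_table H d T}
        \<subseteq> (\<lambda>T. table_rel Hbar d permbar (secbar d) `` {T}) ` {T. valid_table Hbar d T}"
      using valid_table_map_actbar by blast
    show "(\<lambda>T. table_rel Hbar d permbar (secbar d) `` {T}) ` {T. valid_table Hbar d T}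
        \<subseteq> (\<lambda>T. table_rel Hbar d permbar (secbar d) `` {map_table (actbar d p s) T}) ` {T. valid_table H d T}"
    proof
      fix B assume "B \<in> (\<lambda>T. table_rel Hbar d permbar (secbar d) `` {T}) ` {T. valid_table Hbar d T}"
      then obtain S where S: "valid_table Hbar d S" "B = table_rel Hbar d permbar (secbar d) `` {S}" by blast
      obtain T where "valid_table H d T" "map_table (actbar d p s) T = S"
        using lift_valid_table_Gbar[OF S(1)] .
      then show "B \<in> (\<lambda>T. table_rel Hbar d permbar (secbar d) `` {map_table (actbar d p s) T}) ` {T. valid_table H d T}"
        using S(2) by blast
    qed
  qed
  finally show ?thesis .
qed

end

section \<open>Injectivity for self-similar groups\<close>

locale self_similar_group = group G + wreath_recursion_magma G d perm sec
  for G (structure) and d :: nat and perm :: "'a \<Rightarrow> nat \<Rightarrow> nat" and sec :: "'a \<Rightarrow> nat \<Rightarrow> 'a"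
begin

lemma perm_one: "i < d \<Longrightarrow> perm \<one> i = i"
proof -
  assume i: "i < d"
  have "perm \<one> (perm \<one> i) = perm \<one> i" using perm_mult[of \<one> \<one> i] i by simp
  moreover have "inj_on (perm \<one>) {0..<d}" using perm_bij[of \<one>] by (simp add: bij_betw_def)
  ultimately show ?thesis using perm_less[of \<one> i] i by (simp add: inj_on_def)
qed

lemma sec_one: "i < d \<Longrightarrow> sec \<one> i = \<one>"
proof -
  assume i: "i < d"
  then have x: "sec \<one> i \<in> carrier G" using sec_closed by simp
  have "sec \<one> i \<otimes> sec \<one> i = sec \<one> i"
    using sec_mult[of \<one> \<one> i] i by (simp add: perm_one)
  then show ?thesis using l_cancel_one[OF x x] by simp
qed

lemma act_one: "w \<in> lists {0..<d} \<Longrightarrow> act perm sec \<one> w = w"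
  by (induction w) (auto simp: perm_one sec_one)

lemma secw_one: "w \<in> lists {0..<d} \<Longrightarrow> secw sec \<one> w = \<one>"
  by (induction w) (auto simp: sec_one)

lemma Kset_Suc_subset: "Kset G d perm sec n \<subseteq> Kset G d perm sec (Suc n)"
proof
  fix g assume g: "g \<in> Kset G d perm sec n"
  have "act perm sec g v = v \<and> secw sec g v = \<one>"
    if v: "v \<in> lists {0..<d}" "length v = Suc n" for v
  proof -
    obtain v' x where vx: "v = v' @ [x]" using v(2) by (cases v rule: rev_cases) auto
    then have "act perm sec g v' = v'" "secw sec g v' = \<one>" and x: "[x] \<in> lists {0..<d}"
      using g v unfolding Kset_def by auto
    then show ?thesis unfolding vx act_append secw_append using act_one[OF x] secw_one[OF x] by simp
  qed
  then show "g \<in> Kset G d perm sec (Suc n)" using g unfolding Kset_def by blast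
qed

lemma Kset_mono: "n \<le> m \<Longrightarrow> Kset G d perm sec n \<subseteq> Kset G d perm sec m"
  using lift_Suc_mono_le[of "Kset G d perm sec"] Kset_Suc_subset by blast

lemma sections_eventually_equal:
  assumes kernel: "(\<Union>n. Kset G d perm sec n) = action_kernel G d perm sec"
    and g: "g \<in> carrier G" and g': "g' \<in> carrier G"
    and same_action: "\<forall>w\<in>lists {0..<d}. act perm sec g w = act perm sec g' w"
  shows "\<exists>n. \<forall>w\<in>lists {0..<d}. n \<le> length w \<longrightarrow> secw sec g w = secw sec g' w"
proof -
  define k where "k = inv g' \<otimes> g"
  have k: "k \<in> carrier G" and gk: "g = g' \<otimes> k"
    using g g' unfolding k_def by (simp_all add: m_assoc[symmetric])
  have "act perm sec k w = w" if w: "w \<in> lists {0..<d}" for w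
  proof -
    have "act perm sec k w = act perm sec (inv g') (act perm sec g w)"
      unfolding k_def using act_mult[OF inv_closed[OF g'] g w] .
    also have "\<dots> = act perm sec (inv g' \<otimes> g') w"
      using act_mult[OF inv_closed[OF g'] g' w] same_action w by simp
    also have "\<dots> = w" using g' w by (simp add: act_one)
    finally show ?thesis .
  qed
  then have "k \<in> action_kernel G d perm sec" using k unfolding action_kernel_def by blast
  then obtain n where n: "k \<in> Kset G d perm sec n" using kernel by blast
  have "secw sec g w = secw sec g' w" if w: "w \<in> lists {0..<d}" "n \<le> length w" for w
  proof -
    have "k \<in> Kset G d perm sec (length w)" using Kset_mono[OF w(2)] n by blast
    then have "act perm sec k w = w" "secw sec k w = \<one>" using w(1) unfolding Kset_def by auto
    then show ?thesis using secw_mult[OF g' k w(1)] secw_closed[OF g' w(1)] gk by simp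
  qed
  then show ?thesis by blast
qed

lemma eventually_equiv_level_tables:
  assumes kernel: "(\<Union>n. Kset G d perm sec n) = action_kernel G d perm sec" and d: "0 < d"
    and T1: "valid_table G d T1" and T2: "valid_table G d T2"
    and agree: "agree_beyond M (map_table (actbar d perm sec) (expansions d perm sec T1))
      (map_table (actbar d perm sec) (expansions d perm sec T2))"
    and N: "M \<le> N" "\<forall>v\<in>top_row T1. length v \<le> N" "\<forall>v\<in>top_row T2. length v \<le> N"
  shows "eventually_equiv d perm sec (restrict_table (level d N) (expansions d perm sec T1))
    (restrict_table (level d N) (expansions d perm sec T2))"
proof (rule eventually_equiv_if_sections_eventually_agree)
  show "valid_table G d (restrict_table (level d N) (expansions d perm sec T1))"
    "valid_table G d (restrict_table (level d N) (expansions d perm sec T2))"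
    using table_rel_level[OF d T1 N(2)] table_rel_level[OF d T2 N(3)] table_rel_valid by blast+
  have lev: "level d N \<subseteq> lists {0..<d}" unfolding level_def by blast
  show "top_row (restrict_table (level d N) (expansions d perm sec T1)) =
      top_row (restrict_table (level d N) (expansions d perm sec T2))"
    using top_row_restrict_expansions[OF lev level_below_top_row[OF d T1 N(2)]]
      top_row_restrict_expansions[OF lev level_below_top_row[OF d T2 N(3)]] by simp
  fix v g u g' u'
  assume "(v, g, u) \<in> restrict_table (level d N) (expansions d perm sec T1)"
    and "(v, g', u') \<in> restrict_table (level d N) (expansions d perm sec T2)"
  then have c: "(v, g, u) \<in> expansions d perm sec T1" and c': "(v, g', u') \<in> expansions d perm sec T2"
    and "length v = N"
    unfolding restrict_table_def level_def by auto
  then have "M \<le> length v" using N(1) by simp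
  from same_image_beyond[OF T2 agree this c c']
  have "u = u'" "actbar d perm sec g' = actbar d perm sec g" by auto
  moreover from this(2) have "\<forall>w\<in>lists {0..<d}. act perm sec g w = act perm sec g' w"
    by (metis actbar_apply)
  ultimately show "u = u' \<and> (\<forall>w\<in>lists {0..<d}. act perm sec g w = act perm sec g' w) \<and>
      (\<exists>n. \<forall>w\<in>lists {0..<d}. n \<le> length w \<longrightarrow> secw sec g w = secw sec g' w)"
    using sections_eventually_equal[OF kernel expansions_carrier[OF T1 c] expansions_carrier[OF T2 c']]
    by blast
qed

lemma table_rel_if_table_rel_map_actbar:
  assumes kernel: "(\<Union>n. Kset G d perm sec n) = action_kernel G d perm sec"
    and T1: "valid_table G d T1" and T2: "valid_table G d T2"
    and rel: "(map_table (actbar d perm sec) T1, map_table (actbar d perm sec) T2)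
      \<in> table_rel Hbar d permbar (secbar d)"
  shows "(T1, T2) \<in> table_rel G d perm sec"
proof (cases "d = 0")
  case True
  then show ?thesis
    using table_rel_empty_if_degree_zero[OF True] T1 T2 table_rel_sym table_rel_trans by metis
next
  case False
  then have d: "0 < d" by simp
  interpret bar: wreath_recursion_magma Hbar d permbar "secbar d" by (rule wreath_recursion_magma_Gbar)
  obtain M where M: "agree_beyond M (map_table (actbar d perm sec) (expansions d perm sec T1))
      (map_table (actbar d perm sec) (expansions d perm sec T2))"
    using rel unfolding bar.table_rel_iff_eventually_equiv eventually_equiv_def
      expansions_map_actbar[OF T1] expansions_map_actbar[OF T2] by blast
  obtain N1 where N1: "\<forall>v\<in>top_row T1. length v \<le> N1" using valid_table_top_length_bound[OF T1] .
  obtain N2 where N2: "\<forall>v\<in>top_row T2. length v \<le> N2" using valid_table_top_length_bound[OF T2] .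
  define N where "N = max M (max N1 N2)"
  have N: "M \<le> N" "\<forall>v\<in>top_row T1. length v \<le> N" "\<forall>v\<in>top_row T2. length v \<le> N"
    using N1 N2 unfolding N_def by (auto simp: le_max_iff_disj)
  have rel1: "(T1, restrict_table (level d N) (expansions d perm sec T1)) \<in> table_rel G d perm sec"
    and rel2: "(T2, restrict_table (level d N) (expansions d perm sec T2)) \<in> table_rel G d perm sec"
    using table_rel_level[OF d T1 N(2)] table_rel_level[OF d T2 N(3)] .
  moreover have "(restrict_table (level d N) (expansions d perm sec T1),
      restrict_table (level d N) (expansions d perm sec T2)) \<in> table_rel G d perm sec"
    using eventually_equiv_level_tables[OF kernel d T1 T2 M N] rel1 rel2
    unfolding table_rel_iff_eventually_equiv by blast
  ultimately show ?thesis using table_rel_sym table_rel_trans by metis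
qed

lemma inj_on_natural_map:
  assumes kernel: "(\<Union>n. Kset G d perm sec n) = action_kernel G d perm sec"
  shows "inj_on (natural_map G d perm sec) (carrier (V_group G d perm sec))"
proof (rule inj_onI)
  interpret bar: wreath_recursion_magma Hbar d permbar "secbar d" by (rule wreath_recursion_magma_Gbar)
  fix A B assume "A \<in> carrier (V_group G d perm sec)" "B \<in> carrier (V_group G d perm sec)"
    and eq: "natural_map G d perm sec A = natural_map G d perm sec B"
  then obtain T1 T2 where T1: "valid_table G d T1" "A = table_rel G d perm sec `` {T1}"
    and T2: "valid_table G d T2" "B = table_rel G d perm sec `` {T2}"
    unfolding carrier_V_group by blast
  have "(map_table (actbar d perm sec) T1, map_table (actbar d perm sec) T2)
      \<in> table_rel Hbar d permbar (secbar d)"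
    using eq unfolding T1(2) T2(2) natural_map_class[OF T1(1)] natural_map_class[OF T2(1)]
    by (simp add: eq_equiv_class_iff[OF equiv_table_rel] valid_table_map_actbar T1(1) T2(1))
  then have "(T1, T2) \<in> table_rel G d perm sec"
    by (rule table_rel_if_table_rel_map_actbar[OF kernel T1(1) T2(1)])
  then show "A = B" unfolding T1(2) T2(2) by (rule equiv_class_eq[OF equiv_table_rel])
qed

end

lemma self_similar_groupI:
  assumes "group G" and "wreath_recursion G d perm sec"
  shows "self_similar_group G d perm sec"
proof -
  interpret group G by (rule assms(1))
  show ?thesis
  proof (intro self_similar_group.intro wreath_recursion_magma.intro)
    show "group G" by (rule assms(1))
  qed (use assms(2) in \<open>auto simp: wreath_recursion_def\<close>)
qed

theorem proposition3p9:
  fixes G :: "'g monoid" and d :: nat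
    and perm :: "'g \<Rightarrow> nat \<Rightarrow> nat" and sec :: "'g \<Rightarrow> nat \<Rightarrow> 'g"
  assumes "group G"
    and "wreath_recursion G d perm sec"
  shows "(\<forall>n\<ge>1. Kset G d perm sec (n - 1) \<subseteq> Kset G d perm sec n) \<and>
         ((\<Union>n. Kset G d perm sec n) = action_kernel G d perm sec \<longrightarrow>
            natural_map G d perm sec \<in>
              iso (V_group G d perm sec) (V_group (Gbar G d perm sec) d permbar (secbar d)))"
proof -
  interpret self_similar_group G d perm sec using self_similar_groupI[OF assms] .
  show ?thesis
  proof (intro conjI allI impI)
    fix n :: nat
    show "Kset G d perm sec (n - 1) \<subseteq> Kset G d perm sec n" by (rule Kset_mono) simp
  next
    assume "(\<Union>n. Kset G d perm sec n) = action_kernel G d perm sec"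
    then show "natural_map G d perm sec \<in> iso (V_group G d perm sec) (V_group (Gbar G d perm sec) d permbar (secbar d))"
      using natural_map_hom inj_on_natural_map natural_map_surjective
      unfolding iso_def bij_betw_def by blast
  qed
qed

end
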